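(* Let $d$ be a real number and $w$ a binary word. If $P_d(w)$ holds, then $P_d(v)$ holds for each (nonempty) prefix $v$ of $w$.
   Context: Words are finite sequences over $\{0,1\}$; $w[i..j]=w[i]\cdots w[j]$; $\bar c$ denotes the letter different from $c$. A period of $w$ is $p\ge1$ with $w[i+p]=w[i]$ for all $1\le i\le|w|-p$. A run of $w$ is an interval $[i..j]$, $1\le i<j\le|w|$, such that with $p$ the least period of $w[i..j]$: $j-i+1\ge 2p$, ($i=1$ or $w[i-1]\ne w[i-1+p]$), and ($j=|w|$ or $w[j+1]\ne w[j+1-p]$). For $c\in\{0,1\}$, $<_c$ is the lexicographic order on words from the letter order $0<_01$, resp. $1<_10$ (proper prefixes are smaller). A nonempty word $x$ is $<$-Lyndon if for every factorization $x=yz$, $y,z$ nonempty, $x\neq zy$ and $x<zy$. For a position $1<i\le|w|$ define: $c_w(i)=\overline{w[i-1]}$; $L_w(i)=\max\{j: w[i..j]$ is $<_{c_w(i)}$-Lyndon$\}$; $D_w(i)=L_w(i)-i+1$; $S_w(i)=\min\{j: D_w(i)$ is a period of $w[j..L_w(i)]\}$; $E_w(i)=\max\{j: D_w(i)$ is a period of $w[i..j]\}$; $R_w(i)=[S_w(i)..E_w(i)]$. For a run $r=[s..e]$ of $w$ with $e=|w|$ and $c\in\{0,1\}$ let $r_w(c)=\min\{i: R_w(i)=r$ and $w[i..L_w(i)]$ is $<_c$-Lyndon$\}$, and let $f_w(r)\in\{0,1\}$ be such that $r_w(f_w(r))\ge r_w(\overline{f_w(r)})$, with $f_w(r)=0$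 if the period of $w[s..e]$ is one. A position $1<i\le|w|$ is lost in $w$ iff one of: (i) $E_w(i)<|w|$, $S_w(i)>1$ and $R_w(i)$ is not a run; (ii) $E_w(i)<|w|$, $R_w(i)$ is a run, and $i+D_w(i)\le E_w(i)$; (iii) $E_w(i)=|w|$, $R_w(i)$ is a run $r$, $i+D_w(i)\le E_w(i)$, $S_w(i)<i$, and $w[i..L_w(i)]$ is $<_{f_w(r)}$-Lyndon. For real $d$ and a binary word $w$ with lost positions $p_1<\dots<p_k$, the predicate $P_d(w)$ holds iff $p_i-1\ge i\,d$ for all $i=1,\dots,k$. *)

theory Defs
  imports Complex_Main "HOL-Library.Sublist"
begin

text \<open>Binary words are bool lists; letter 0 is False, letter 1 is True.
  Positions are 1-based.\<close>

definition nth1 :: "bool list \<Rightarrow> nat \<Rightarrow> bool" where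
  "nth1 w i = w ! (i - 1)"

definition fac :: "bool list \<Rightarrow> nat \<Rightarrow> nat \<Rightarrow> bool list" where
  "fac w i j = take (Suc j - i) (drop (i - 1) w)"

definition is_period :: "bool list \<Rightarrow> nat \<Rightarrow> bool" where
  "is_period x p \<longleftrightarrow> p \<ge> 1 \<and>
     (\<forall>i. 1 \<le> i \<and> i + p \<le> length x \<longrightarrow> nth1 x (i + p) = nth1 x i)"

definition least_period :: "bool list \<Rightarrow> nat" where
  "least_period x = (LEAST p. is_period x p)"

definition is_run :: "bool list \<Rightarrow> nat \<times> nat \<Rightarrow> bool" where
  "is_run w r \<longleftrightarrow> (case r of (i, j) \<Rightarrow>
     1 \<le> i \<and> i < j \<and> j \<le> length w \<and>
     (let p = least_period (fac w i j) in
        2 * p \<le> j - i + 1 \<and>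
        (i = 1 \<or> nth1 w (i - 1) \<noteq> nth1 w (i - 1 + p)) \<and>
        (j = length w \<or> nth1 w (j + 1) \<noteq> nth1 w (j + 1 - p))))"

text \<open>Lexicographic order \<open><_c\<close>: letter c is the smaller letter; proper prefixes are smaller.\<close>
definition lex_less :: "bool \<Rightarrow> bool list \<Rightarrow> bool list \<Rightarrow> bool" where
  "lex_less c x y \<longleftrightarrow>
     (\<exists>v. y = x @ v \<and> v \<noteq> []) \<or>
     (\<exists>u a b v1 v2. x = u @ a # v1 \<and> y = u @ b # v2 \<and> a = c \<and> b = (\<not> c))"

definition lyndon :: "bool \<Rightarrow> bool list \<Rightarrow> bool" where
  "lyndon c x \<longleftrightarrow> x \<noteq> [] \<and>
     (\<forall>y z. y \<noteq> [] \<longrightarrow> z \<noteq> [] \<longrightarrow> x = y @ z \<longrightarrow> x \<noteq> z @ y \<and> lex_less c x (z @ y))"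

definition cw :: "bool list \<Rightarrow> nat \<Rightarrow> bool" where
  "cw w i = (\<not> nth1 w (i - 1))"

definition Lw :: "bool list \<Rightarrow> nat \<Rightarrow> nat" where
  "Lw w i = Max {j. i \<le> j \<and> j \<le> length w \<and> lyndon (cw w i) (fac w i j)}"

definition Dw :: "bool list \<Rightarrow> nat \<Rightarrow> nat" where
  "Dw w i = Lw w i - i + 1"

definition Sw :: "bool list \<Rightarrow> nat \<Rightarrow> nat" where
  "Sw w i = Min {j. 1 \<le> j \<and> j \<le> Lw w i \<and> is_period (fac w j (Lw w i)) (Dw w i)}"

definition Ew :: "bool list \<Rightarrow> nat \<Rightarrow> nat" where
  "Ew w i = Max {j. i \<le> j \<and> j \<le> length w \<and> is_period (fac w i j) (Dw w i)}"

definition Rw :: "bool list \<Rightarrow> nat \<Rightarrow> nat \<times> nat" where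
  "Rw w i = (Sw w i, Ew w i)"

text \<open>r_w(c); the infimum of the empty set of naturals is 0 (convention).\<close>
definition rw :: "bool list \<Rightarrow> nat \<times> nat \<Rightarrow> bool \<Rightarrow> nat" where
  "rw w r c = Inf {i. 1 < i \<and> i \<le> length w \<and> Rw w i = r \<and> lyndon c (fac w i (Lw w i))}"

definition fw :: "bool list \<Rightarrow> nat \<times> nat \<Rightarrow> bool" where
  "fw w r = (if least_period (fac w (fst r) (snd r)) = 1 then False
             else if rw w r False \<ge> rw w r True then False else True)"

definition lost :: "bool list \<Rightarrow> nat \<Rightarrow> bool" where
  "lost w i \<longleftrightarrow> 1 < i \<and> i \<le> length w \<and>
     ((Ew w i < length w \<and> Sw w i > 1 \<and> \<not> is_run w (Rw w i)) \<or>
      (Ew w i < length w \<and> is_run w (Rw w i) \<and> i + Dw w i \<le> Ew w i) \<or>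
      (Ew w i = length w \<and> is_run w (Rw w i) \<and> i + Dw w i \<le> Ew w i \<and> Sw w i < i \<and>
         lyndon (fw w (Rw w i)) (fac w i (Lw w i))))"

definition P :: "real \<Rightarrow> bool list \<Rightarrow> bool" where
  "P d w \<longleftrightarrow> (let ps = sorted_list_of_set {i. lost w i} in
     \<forall>k < length ps. real (ps ! k) - 1 \<ge> real (Suc k) * d)"

end

theory Submission
  imports Defs "HOL-Library.List_Lexorder"
begin

text \<open>Appending a letter \<open>a\<close> to \<open>v\<close> maps the lost positions of \<open>v\<close> injectively to lost positions
  of \<open>v a\<close>, never moving a position to the right. Usually a lost position stays lost. The only
  exception is a position \<open>i\<close> in the final run (case (iii)) when \<open>a\<close> breaks the period by the
  larger letter: then the run becomes a run of \<open>v a\<close> ending one letter early, and \<open>i\<close> is replaced by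
  the position at the same offset from the first position whose root is Lyndon for the opposite
  order. Hence the \<open>k\<close>-th lost position of \<open>v a\<close> is at most the \<open>k\<close>-th lost position of \<open>v\<close>, so
  \<open>P_d\<close> passes from \<open>v a\<close> to \<open>v\<close>, and by induction to every prefix.\<close>

section \<open>Lexicographic comparison and Lyndon words\<close>

definition first_diff :: "bool \<Rightarrow> bool list \<Rightarrow> bool list \<Rightarrow> nat \<Rightarrow> bool" where
  "first_diff c x y K \<longleftrightarrow> K < length x \<and> K < length y \<and> (\<forall>k<K. x!k = y!k) \<and> x!K = c \<and> y!K = (\<not>c)"

lemma lex_less_lexord: "lex_less c x y \<longleftrightarrow> (x,y) \<in> lexord {(a,b). a = c \<and> b = (\<not> c)}"
  unfolding lex_less_def lexord_def by (auto simp: neq_Nil_conv)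

lemma lex_less_iff_first_diff:
  "lex_less c x y \<longleftrightarrow> (length x < length y \<and> take (length x) y = x) \<or> (\<exists>K. first_diff c x y K)"
proof -
  have take_eq: "take K x = take K y \<longleftrightarrow> (\<forall>k<K. x!k = y!k)" if "K < length x" "K < length y" for K
    using that by (auto simp: list_eq_iff_nth_eq min_def)
  show ?thesis
    unfolding lex_less_lexord lexord_take_index_conv first_diff_def
    by (auto simp: take_eq)
qed

lemma first_diff_lex_less: "first_diff c x y K \<Longrightarrow> lex_less c x y"
  using lex_less_iff_first_diff by blast

lemma first_diff_asym: "first_diff c x y K \<Longrightarrow> first_diff c y x K' \<Longrightarrow> False"
  unfolding first_diff_def by (metis linorder_neqE_nat)

lemma first_diff_cong:
  "first_diff c x y K \<Longrightarrow> K < length x' \<Longrightarrow> K < length y' \<Longrightarrow> \<forall>k\<le>K. x'!k = x!k \<Longrightarrow> \<forall>k\<le>K. y'!k = y!k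
   \<Longrightarrow> first_diff c x' y' K"
  unfolding first_diff_def by auto

lemma first_diff_append: "first_diff c x y K \<Longrightarrow> first_diff c (x @ a) (y @ b) K"
  unfolding first_diff_def by (auto simp: nth_append)

lemma lex_less_same_length_first_diff:
  "lex_less c x y \<Longrightarrow> length x = length y \<Longrightarrow> \<exists>K. first_diff c x y K"
  unfolding lex_less_iff_first_diff by auto

lemma lyndon_rotate:
  assumes "lyndon c x" "0 < m" "m < length x"
  shows "rotate m x \<noteq> x \<and> lex_less c x (rotate m x)"
proof -
  have "take m x \<noteq> []" "drop m x \<noteq> []" using assms by auto
  moreover have "rotate m x = drop m x @ take m x" using rotate_drop_take[of m x] assms(3) by simp
  ultimately show ?thesis using assms(1) append_take_drop_id[of m x] unfolding lyndon_def by metis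
qed

lemma lyndon_rotate_first_diff:
  assumes "lyndon c x" "0 < m" "m < length x"
  shows "\<exists>K. first_diff c x (rotate m x) K"
  using lyndon_rotate[OF assms] by (intro lex_less_same_length_first_diff) auto

lemma lyndon_unbordered:
  assumes ly: "lyndon c u" and ps: "u = p @ s" and st: "u = s @ t" and "p \<noteq> []" "s \<noteq> []"
  shows False
proof -
  let ?r = "{(a, b). a = c \<and> b = (\<not> c)}"
  have irr: "\<forall>a. (a, a) \<notin> ?r" by auto
  have lens: "length t = length p" "0 < length p" "length p < length u" "0 < length s" "length s < length u"
    using ps st assms(4,5) by (auto dest: arg_cong[of _ _ length])
  have "rotate (length p) u = s @ p" using ps by (simp add: rotate_append)
  with lyndon_rotate[OF ly lens(2,3)] st have "(s @ t, s @ p) \<in> lexord ?r"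
    by (simp add: lex_less_lexord)
  then have tp: "(t, p) \<in> lexord ?r" using lexord_append_leftD irr by blast
  have "rotate (length s) u = t @ s" using st by (simp add: rotate_append)
  with lyndon_rotate[OF ly lens(4,5)] ps have "p @ s \<noteq> t @ s" "(p @ s, t @ s) \<in> lexord ?r"
    by (auto simp: lex_less_lexord)
  then have "(p, t) \<in> lexord ?r" using lexord_sufE lens(1) by fastforce
  moreover have "asym (lexord ?r)" by (rule lexord_asym) (auto intro: asymI)
  ultimately show False using tp by (auto dest: asymD)
qed

lemma lyndon_first_diff_suffix:
  assumes ly: "lyndon c u" and m: "0 < m" "m < length u"
  shows "\<exists>K. first_diff c u (drop m u) K"
proof -
  define s where "s = drop m u"
  define p where "p = take m u"
  have rot: "rotate m u = s @ p" using rotate_drop_take[of m u] m by (simp add: s_def p_def)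
  obtain K where K: "first_diff c u (s @ p) K" using lyndon_rotate_first_diff[OF ly m] rot by auto
  show ?thesis
  proof (cases "K < length s")
    case True
    have "first_diff c u s K"
      by (rule first_diff_cong[OF K]) (use K True in \<open>auto simp: first_diff_def nth_append\<close>)
    then show ?thesis by (auto simp: s_def)
  next
    case False
    have "take (length s) u = s"
      using K False m by (intro nth_equalityI) (auto simp: first_diff_def nth_append s_def)
    then have "u = s @ drop (length s) u" by (metis append_take_drop_id)
    moreover have "u = p @ s" "p \<noteq> []" "s \<noteq> []" using m by (auto simp: s_def p_def)
    ultimately show ?thesis using lyndon_unbordered[OF ly] by blast
  qed
qed

lemma lyndon_no_period:
  assumes ly: "lyndon c x" and D: "0 < D" "D < length x"
    and per: "\<forall>k. k + D < length x \<longrightarrow> x!(k+D) = x!k"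
  shows False
proof -
  obtain K where "first_diff c x (drop D x) K" using lyndon_first_diff_suffix[OF ly D] by blast
  then have "K + D < length x" "x!K = c" "drop D x ! K = (\<not>c)"
    unfolding first_diff_def by auto
  then show False using per[rule_format, of K] D by (simp add: add.commute)
qed

lemma lyndon_first_last:
  assumes ly: "lyndon c x" and l: "2 \<le> length x"
  shows "x!0 = c \<and> x!(length x - 1) = (\<not>c)"
proof -
  have m: "0 < length x - 1" "length x - 1 < length x" using l by auto
  obtain K where K: "first_diff c x (drop (length x - 1) x) K" using lyndon_first_diff_suffix[OF ly m] by blast
  then have "K < 1" unfolding first_diff_def using l by simp
  then show ?thesis using K m unfolding first_diff_def by simp
qed

lemma lyndon_singleton: "length x = 1 \<Longrightarrow> lyndon c x"
  unfolding lyndon_def by (auto simp: length_Suc_conv) (metis append_eq_Cons_conv append_is_Nil_conv)+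

text \<open>The suffix starting \<open>D\<close> positions later is smaller than the word itself.\<close>

lemma not_lyndon_smaller_break:
  assumes D: "0 < D" "D \<le> N" "N < length x" and per: "\<forall>k. k + D < N \<longrightarrow> x!(k+D) = x!k"
    and br: "x!N = c" "x!(N-D) = (\<not>c)"
  shows "\<not> lyndon c x"
proof
  assume ly: "lyndon c x"
  obtain K where K: "first_diff c x (drop D x) K" using lyndon_first_diff_suffix[OF ly] D by fastforce
  have "first_diff c (drop D x) x (N-D)"
    unfolding first_diff_def using D per br by (auto simp: add.commute)
  then show False using K first_diff_asym by blast
qed

lemma lyndon_if_first_diff_suffixes:
  assumes "x \<noteq> []" and suf: "\<forall>m. 0 < m \<and> m < length x \<longrightarrow> (\<exists>K. first_diff c x (drop m x) K)"
  shows "lyndon c x"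
proof -
  have "x \<noteq> z @ y \<and> lex_less c x (z @ y)" if y: "y \<noteq> []" and z: "z \<noteq> []" and xyz: "x = y @ z" for y z
  proof -
    have "0 < length y" "length y < length x" using y z xyz by auto
    then obtain K where "first_diff c x (drop (length y) x) K" using suf by blast
    then have K: "first_diff c x (z @ y) K" using xyz first_diff_append[of c x z K "[]" y] by simp
    then show ?thesis using first_diff_lex_less[OF K] unfolding first_diff_def by auto
  qed
  then show ?thesis using assms(1) unfolding lyndon_def by blast
qed

context
  fixes c :: bool and x :: "bool list" and D N :: nat
  assumes root: "lyndon c (take D x)" and D: "0 < D" "D \<le> N" and len: "length x = Suc N"
    and per: "\<forall>k. k + D < N \<longrightarrow> x!(k+D) = x!k"
    and br: "x!N = (\<not>c)" "x!(N-D) = c"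
begin

private lemma nth_mod_period: "k < N \<Longrightarrow> x!k = x!(k mod D)"
proof (induct k rule: less_induct)
  case (less k)
  show ?case
  proof (cases "k < D")
    case False
    then have "x!k = x!(k-D)" using per less.prems by (metis le_add_diff_inverse2 not_less)
    also have "\<dots> = x!((k-D) mod D)" using less D False by simp
    finally show ?thesis using False by (simp add: le_mod_geq)
  qed simp
qed

private lemma nth_N_mod_period: "x!(N mod D) = c"
  using nth_mod_period[of "N - D"] D br by (simp add: le_mod_geq)

private lemma first_diff_suffix_multiple:
  assumes m: "0 < m" "m \<le> N" "m mod D = 0"
  shows "first_diff c x (drop m x) (N-m)"
proof -
  have "x!k = x!(m+k)" if "k < N - m" for k
    using nth_mod_period[of k] nth_mod_period[of "m+k"] that m by (simp add: mod_add_left_eq[symmetric])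
  moreover have "(N - m) mod D = N mod D"
    using m by (metis add_0_right le_add_diff_inverse2 mod_add_right_eq)
  then have "x!(N-m) = c" using nth_mod_period[of "N-m"] nth_N_mod_period m by simp
  ultimately show ?thesis unfolding first_diff_def using m len br by auto
qed

text \<open>The comparison reduces to that of the root with its suffix at offset \<open>m mod D\<close>.\<close>

private lemma first_diff_suffix_non_multiple:
  assumes m: "0 < m" "m \<le> N" and r: "m mod D \<noteq> 0"
  shows "\<exists>K. first_diff c x (drop m x) K"
proof -
  define r where "r = m mod D"
  have r_pos: "0 < r" "r < D" using r D by (auto simp: r_def)
  have lt: "length (take D x) = D" using D len by simp
  obtain K0 where K0: "first_diff c (take D x) (drop r (take D x)) K0"
    using lyndon_first_diff_suffix[OF root] r_pos lt by fastforce
  have K0D: "K0 < D - r" using K0 lt unfolding first_diff_def by simp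
  have K0c: "x!K0 = c" using K0 K0D unfolding first_diff_def by simp
  have K0nc: "x!(r+K0) = (\<not>c)" using K0 K0D lt unfolding first_diff_def by simp
  have K0agree: "x!k = x!(r+k)" if "k < K0" for k
  proof -
    have "take D x ! k = drop r (take D x) ! k" using K0 that unfolding first_diff_def by blast
    then show ?thesis using that K0D lt by simp
  qed
  have shift: "x!(m+k) = x!(r+k)" if "m + k < N" "r + k < D" for k
  proof -
    have "(m + k) mod D = r + k" using that(2) by (metis mod_add_left_eq mod_less r_def)
    then show ?thesis using nth_mod_period[OF that(1)] by simp
  qed
  show ?thesis
  proof (cases "m + K0 < N")
    case True
    have "x!k = drop m x ! k" if "k < K0" for k
      using K0agree[OF that] shift[of k] True K0D that m len by simp
    moreover have "drop m x ! K0 = (\<not>c)" using K0nc shift[of K0] True K0D m len by simp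
    ultimately have "first_diff c x (drop m x) K0"
      unfolding first_diff_def using True len K0c by simp
    then show ?thesis by blast
  next
    case False
    have NmD: "r + (N - m) < D" using False K0D by simp
    have "N mod D = r + (N - m)"
      using NmD m by (metis le_add_diff_inverse mod_add_left_eq mod_less r_def)
    then have "x!(r + (N - m)) = c" using nth_N_mod_period by simp
    moreover have "N - m \<le> K0" using False by simp
    ultimately have "x!(N-m) = c"
      using K0agree[of "N-m"] K0c by (cases "N - m = K0") simp_all
    moreover have "x!k = drop m x ! k" if "k < N - m" for k
      using shift[of k] K0agree[of k] that False K0D m len by simp
    ultimately have "first_diff c x (drop m x) (N-m)"
      unfolding first_diff_def using m len br by (auto simp: Suc_diff_le)
    then show ?thesis by blast
  qed
qed

lemma lyndon_bigger_break: "lyndon c x"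
proof (rule lyndon_if_first_diff_suffixes)
  show "x \<noteq> []" using len by auto
  show "\<forall>m. 0 < m \<and> m < length x \<longrightarrow> (\<exists>K. first_diff c x (drop m x) K)"
  proof (intro allI impI)
    fix m assume "0 < m \<and> m < length x"
    then have m: "0 < m" "m \<le> N" using len by auto
    show "\<exists>K. first_diff c x (drop m x) K"
      using first_diff_suffix_multiple[OF m] first_diff_suffix_non_multiple[OF m] by blast
  qed
qed

end

lemma lyndon_rotate_lyndon_imp_mod:
  assumes ly: "lyndon c x" and ly': "lyndon c (rotate m x)"
  shows "m mod length x = 0"
proof (rule ccontr)
  assume nz: "m mod length x \<noteq> 0"
  let ?m = "m mod length x"
  have "x \<noteq> []" using ly by (simp add: lyndon_def)
  then have m: "0 < ?m" "?m < length x" using nz by auto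
  have "(length x - ?m + m) mod length x = (length x - ?m + ?m) mod length x"
    by (simp only: mod_add_right_eq)
  then have undo: "rotate (length x - ?m) (rotate m x) = x"
    using m by (simp add: rotate_rotate)
  have "lex_less c x (rotate m x)" using lyndon_rotate[OF ly m] rotate_conv_mod[of m x] by simp
  moreover have "lex_less c (rotate m x) x"
    using lyndon_rotate[OF ly', of "length x - ?m"] m undo by simp
  ultimately show False
    using lex_less_same_length_first_diff first_diff_asym by (metis length_rotate)
qed

lemma rotate_inj: "rotate m xs = rotate m ys \<Longrightarrow> xs = ys"
  by (induction m) (auto dest: injD[OF inj_rotate1])

definition letter_rank :: "bool \<Rightarrow> bool \<Rightarrow> bool" where
  "letter_rank c b = (b \<noteq> c)"

lemma inj_letter_rank: "inj (letter_rank c)"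
  unfolding inj_on_def letter_rank_def by auto

lemma lex_less_letter_rank: "lex_less c x y \<longleftrightarrow> map (letter_rank c) x < map (letter_rank c) y"
proof -
  have take_eq: "take i (map (letter_rank c) x) = take i (map (letter_rank c) y) \<longleftrightarrow> take i x = take i y"
    for i x y by (simp add: take_map inj_map_eq_map[OF inj_letter_rank])
  have less: "letter_rank c a < letter_rank c b \<longleftrightarrow> a = c \<and> b = (\<not>c)" for a b
    unfolding letter_rank_def by auto
  have "lex_less c x y \<longleftrightarrow> (length x < length y \<and> take (length x) y = x) \<or>
     (\<exists>i. i < min (length x) (length y) \<and> take i x = take i y \<and> (x!i, y!i) \<in> {(a,b). a = c \<and> b = (\<not> c)})"
    unfolding lex_less_lexord lexord_take_index_conv ..
  moreover have "map (letter_rank c) x < map (letter_rank c) y \<longleftrightarrow>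
     (length x < length y \<and> take (length x) (map (letter_rank c) y) = map (letter_rank c) x) \<or>
     (\<exists>i. i < min (length x) (length y) \<and> take i (map (letter_rank c) x) = take i (map (letter_rank c) y)
        \<and> (letter_rank c (x!i), letter_rank c (y!i)) \<in> {(a,b). a < b})"
    unfolding list_less_def lexord_take_index_conv by auto
  moreover have "take (length x) (map (letter_rank c) y) = map (letter_rank c) x \<longleftrightarrow> take (length x) y = x"
    by (metis take_eq length_map take_all order_refl)
  ultimately show ?thesis using take_eq less by auto
qed

text \<open>The least conjugate of a primitive word is Lyndon.\<close>

lemma lyndon_conjugate_exists:
  assumes ne: "x \<noteq> []" and prim: "\<forall>m. 0 < m \<and> m < length x \<longrightarrow> rotate m x \<noteq> x"
  shows "\<exists>m<length x. lyndon c (rotate m x)"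
proof -
  define n where "n = length x"
  define F where "F m = map (letter_rank c) (rotate m x)" for m
  have fin: "finite (F ` {..<n})" by simp
  have nen: "F ` {..<n} \<noteq> {}" using ne n_def by auto
  obtain m0 where m0: "m0 < n" "F m0 = Min (F ` {..<n})" using Min_in[OF fin nen] by auto
  have min: "F m0 \<le> F m" if "m < n" for m using m0(2) Min_le[OF fin] that by simp
  have "rotate m0 x \<noteq> q @ p \<and> lex_less c (rotate m0 x) (q @ p)"
    if p: "p \<noteq> []" and q: "q \<noteq> []" and pq: "rotate m0 x = p @ q" for p q
  proof -
    define k where "k = length p"
    have k: "0 < k" "k < n" using p q pq by (auto simp: k_def n_def dest: arg_cong[of _ _ length])
    have qp: "q @ p = rotate k (rotate m0 x)" using pq by (simp add: k_def rotate_append)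
    also have "\<dots> = rotate ((k + m0) mod n) x" by (simp add: rotate_rotate n_def rotate_conv_mod[of "k+m0" x])
    finally have le: "F m0 \<le> map (letter_rank c) (q @ p)" using min[of "(k + m0) mod n"] k unfolding F_def by simp
    have "rotate k (rotate m0 x) \<noteq> rotate m0 x"
    proof
      assume "rotate k (rotate m0 x) = rotate m0 x"
      then have "rotate m0 (rotate k x) = rotate m0 x" by (simp add: rotate_rotate add.commute)
      then have "rotate k x = x" by (rule rotate_inj)
      then show False using prim k n_def by blast
    qed
    then have neq: "p @ q \<noteq> q @ p" using qp pq by simp
    then have "map (letter_rank c) (p @ q) \<noteq> map (letter_rank c) (q @ p)"
      using inj_map_eq_map[OF inj_letter_rank] by blast
    then have "map (letter_rank c) (p @ q) < map (letter_rank c) (q @ p)" using le pq unfolding F_def by simp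
    then show ?thesis using neq lex_less_letter_rank pq by simp
  qed
  then have "lyndon c (rotate m0 x)" unfolding lyndon_def using ne by simp
  then show ?thesis using m0 n_def by blast
qed

section \<open>Periodicity of factors\<close>

text \<open>\<open>is_period (fac w s e) D\<close> read on the positions of \<open>w\<close>, see \<open>is_period_fac_iff\<close>.\<close>

definition has_period_in :: "bool list \<Rightarrow> nat \<Rightarrow> nat \<Rightarrow> nat \<Rightarrow> bool" where
  "has_period_in w D s e \<longleftrightarrow> (\<forall>k. s \<le> k \<and> k + D \<le> e \<longrightarrow> nth1 w (k+D) = nth1 w k)"

lemma length_fac: "1 \<le> i \<Longrightarrow> j \<le> length w \<Longrightarrow> length (fac w i j) = Suc j - i"
  unfolding fac_def by simp

lemma nth_fac: "1 \<le> i \<Longrightarrow> j \<le> length w \<Longrightarrow> k < Suc j - i \<Longrightarrow> fac w i j ! k = nth1 w (i+k)"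
  unfolding fac_def nth1_def by (simp add: add.commute)

lemma nth1_fac:
  "1 \<le> s \<Longrightarrow> e \<le> length w \<Longrightarrow> 1 \<le> i \<Longrightarrow> i \<le> Suc e - s \<Longrightarrow> nth1 (fac w s e) i = nth1 w (s + i - 1)"
  using nth_fac[of s e w "i - 1"] by (simp add: nth1_def)

lemma fac_append: "1 \<le> i \<Longrightarrow> j \<le> length v \<Longrightarrow> fac (v @ u) i j = fac v i j"
  unfolding fac_def by simp

lemma nth1_append: "1 \<le> k \<Longrightarrow> k \<le> length v \<Longrightarrow> nth1 (v @ u) k = nth1 v k"
  unfolding nth1_def by (simp add: nth_append less_eq_Suc_le)

lemma nth1_append_last: "nth1 (v @ [a]) (Suc (length v)) = a"
  unfolding nth1_def by simp

lemma has_period_in_mono: "has_period_in w D s e \<Longrightarrow> s \<le> s' \<Longrightarrow> e' \<le> e \<Longrightarrow> has_period_in w D s' e'"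
  unfolding has_period_in_def by auto

lemma has_period_in_union:
  assumes p1: "has_period_in w D s1 e1" and p2: "has_period_in w D s2 e2" and overlap: "s2 + D \<le> Suc e1"
  shows "has_period_in w D s1 e2"
  unfolding has_period_in_def
proof (intro allI impI)
  fix k assume k: "s1 \<le> k \<and> k + D \<le> e2"
  show "nth1 w (k + D) = nth1 w k"
  proof (cases "k + D \<le> e1")
    case True then show ?thesis using p1 k unfolding has_period_in_def by blast
  next
    case False then have "s2 \<le> k" using overlap by simp
    then show ?thesis using p2 k unfolding has_period_in_def by blast
  qed
qed

lemma has_period_in_extend:
  assumes p: "has_period_in w D s e" and b: "nth1 w (Suc e) = nth1 w (Suc e - D)" and sD: "s + D \<le> Suc e"
  shows "has_period_in w D s (Suc e)"
  unfolding has_period_in_def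
proof (intro allI impI)
  fix k assume k: "s \<le> k \<and> k + D \<le> Suc e"
  show "nth1 w (k + D) = nth1 w k"
  proof (cases "k + D = Suc e")
    case True then show ?thesis using b by (metis add_diff_cancel_right')
  next
    case False then show ?thesis using p k unfolding has_period_in_def by simp
  qed
qed

lemma has_period_in_append:
  "has_period_in v D s e \<Longrightarrow> e \<le> length v \<Longrightarrow> 1 \<le> s \<Longrightarrow> has_period_in (v @ u) D s e"
  unfolding has_period_in_def by (simp add: nth1_append)

lemma has_period_in_mod:
  assumes per: "has_period_in w D s e" and "0 < D" "s \<le> p" "s \<le> q" "p \<le> e" "q \<le> e"
    and pq: "p mod D = q mod D"
  shows "nth1 w p = nth1 w q"
proof -
  have iter: "nth1 w (p + t * D) = nth1 w p" if "s \<le> p" "p + t * D \<le> e" for p t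
    using that
  proof (induct t)
    case (Suc t)
    then have "nth1 w (p + t*D + D) = nth1 w (p + t*D)" using per unfolding has_period_in_def by auto
    then show ?case using Suc by (simp add: ac_simps)
  qed simp
  have "nth1 w p = nth1 w q" if h: "s \<le> p" "p \<le> q" "q \<le> e" "p mod D = q mod D" for p q
  proof -
    obtain t where "q = p + D * t" using mod_eq_nat2E[OF h(4) h(2)] by blast
    then show ?thesis using iter[of p t] h by (simp add: mult.commute)
  qed
  then show ?thesis using assms by (cases "p \<le> q") (simp_all, metis nat_le_linear)
qed

lemma is_period_fac_iff:
  assumes s: "1 \<le> s" and e: "e \<le> length w"
  shows "is_period (fac w s e) D \<longleftrightarrow> 1 \<le> D \<and> has_period_in w D s e"
proof
  assume p: "is_period (fac w s e) D"
  then have D: "1 \<le> D" by (simp add: is_period_def)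
  have "nth1 w (k+D) = nth1 w k" if k: "s \<le> k" "k + D \<le> e" for k
  proof -
    define i where "i = k - s + 1"
    have i: "1 \<le> i" "i + D \<le> length (fac w s e)" using k s e D by (auto simp: i_def length_fac)
    then have "nth1 (fac w s e) (i + D) = nth1 (fac w s e) i" using p unfolding is_period_def by blast
    moreover have "nth1 (fac w s e) (i + D) = nth1 w (s + (i + D) - 1)"
      using i s e D by (intro nth1_fac) (auto simp: length_fac)
    moreover have "nth1 (fac w s e) i = nth1 w (s + i - 1)"
      using i s e D by (intro nth1_fac) (auto simp: length_fac)
    moreover have "s + (i + D) - 1 = k + D" "s + i - 1 = k" using k i_def by auto
    ultimately show ?thesis by simp
  qed
  then show "1 \<le> D \<and> has_period_in w D s e" using D unfolding has_period_in_def by blast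
next
  assume p: "1 \<le> D \<and> has_period_in w D s e"
  have "nth1 (fac w s e) (i + D) = nth1 (fac w s e) i" if i: "1 \<le> i" "i + D \<le> length (fac w s e)" for i
  proof -
    have il: "i + D \<le> Suc e - s" using i s e by (simp add: length_fac)
    have "nth1 (fac w s e) (i + D) = nth1 w (s + (i + D) - 1)" using i s e p il by (intro nth1_fac) auto
    moreover have "nth1 (fac w s e) i = nth1 w (s + i - 1)" using i s e p il by (intro nth1_fac) auto
    moreover have "s \<le> s + i - 1" "s + i - 1 + D \<le> e" using i il p by auto
    then have "nth1 w (s + i - 1 + D) = nth1 w (s + i - 1)" using p unfolding has_period_in_def by blast
    moreover have "s + (i + D) - 1 = s + i - 1 + D" using i by simp
    ultimately show ?thesis by simp
  qed
  then show "is_period (fac w s e) D" using p unfolding is_period_def by blast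
qed

lemma fac_period_root_eq:
  assumes per: "has_period_in w D s e" and D: "0 < D" and s: "1 \<le> s" and e: "e \<le> length w"
    and p: "s \<le> p" "p + D \<le> Suc e" and q: "s \<le> q" "q + D \<le> Suc e" and pq: "p mod D = q mod D"
  shows "fac w p (p + D - 1) = fac w q (q + D - 1)"
proof (rule nth_equalityI)
  show "length (fac w p (p + D - 1)) = length (fac w q (q + D - 1))" using assms by (simp add: length_fac)
  fix k assume "k < length (fac w p (p + D - 1))"
  then have k: "k < D" using assms by (simp add: length_fac)
  have "(p + k) mod D = (q + k) mod D" using pq by (metis mod_add_left_eq)
  then have "nth1 w (p + k) = nth1 w (q + k)" using has_period_in_mod[OF per D] assms k by simp
  then show "fac w p (p + D - 1) ! k = fac w q (q + D - 1) ! k" using k assms by (simp add: nth_fac)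
qed

lemma fac_period_root_rotate:
  assumes per: "has_period_in w D s e" and D: "0 < D" and s: "1 \<le> s" and e: "e \<le> length w"
    and p: "s \<le> p" "p \<le> q" and q: "q + D \<le> Suc e"
  shows "fac w q (q + D - 1) = rotate (q - p) (fac w p (p + D - 1))"
proof (rule nth_equalityI)
  show "length (fac w q (q + D - 1)) = length (rotate (q - p) (fac w p (p + D - 1)))"
    using assms by (simp add: length_fac)
  fix k assume "k < length (fac w q (q + D - 1))"
  then have k: "k < D" using assms by (simp add: length_fac)
  have lp: "length (fac w p (p + D - 1)) = D" using assms by (simp add: length_fac)
  have "rotate (q - p) (fac w p (p + D - 1)) ! k = fac w p (p + D - 1) ! ((q - p + k) mod D)"
    using k lp by (simp add: nth_rotate)
  also have "\<dots> = nth1 w (p + (q - p + k) mod D)" using assms by (intro nth_fac) auto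
  also have "\<dots> = nth1 w (q + k)"
  proof (rule has_period_in_mod[OF per D])
    have "(p + (q - p + k) mod D) mod D = (p + (q - p + k)) mod D" by (simp add: mod_add_right_eq)
    then show "(p + (q - p + k) mod D) mod D = (q + k) mod D" using p by simp
    have "(q - p + k) mod D < D" using D by simp
    then show "p + (q - p + k) mod D \<le> e" using p q by linarith
  qed (use assms k in auto)
  also have "\<dots> = fac w q (q + D - 1) ! k" using assms k by (intro nth_fac[symmetric]) auto
  finally show "fac w q (q + D - 1) ! k = rotate (q - p) (fac w p (p + D - 1)) ! k" by simp
qed

lemma nth_fac_period:
  assumes per: "has_period_in w D i e" and i: "1 \<le> i" and j: "j \<le> length w" "e \<le> j"
    and k: "k + D < Suc e - i"
  shows "fac w i j ! (k + D) = fac w i j ! k"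
proof -
  have "nth1 w (i + k + D) = nth1 w (i + k)" using per k unfolding has_period_in_def by auto
  then show ?thesis using i j k by (simp add: nth_fac add.assoc)
qed

lemma lyndon_fac_no_period:
  assumes i: "1 \<le> i" and j: "j \<le> length w" and ly: "lyndon c (fac w i j)"
    and D: "0 < D" "D < Suc j - i" and per: "has_period_in w D i j"
  shows False
proof (rule lyndon_no_period[OF ly D(1)])
  show "D < length (fac w i j)" using i j D by (simp add: length_fac)
  show "\<forall>k. k + D < length (fac w i j) \<longrightarrow> fac w i j ! (k + D) = fac w i j ! k"
    using nth_fac_period[OF per i j] i j by (simp add: length_fac)
qed

lemma not_lyndon_fac_smaller_break:
  assumes i: "1 \<le> i" and j: "j \<le> length w" and per: "has_period_in w D i e" and D: "0 < D" "i + D \<le> Suc e"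
    and ej: "Suc e \<le> j" and br: "nth1 w (Suc e) = c" "nth1 w (Suc e - D) = (\<not>c)"
  shows "\<not> lyndon c (fac w i j)"
proof (rule not_lyndon_smaller_break[where D=D and N="Suc e - i"])
  show "0 < D" "D \<le> Suc e - i" "Suc e - i < length (fac w i j)" using i j ej D by (auto simp: length_fac)
  show "\<forall>k. k + D < Suc e - i \<longrightarrow> fac w i j ! (k + D) = fac w i j ! k"
    using nth_fac_period[OF per i j] ej by simp
  show "fac w i j ! (Suc e - i) = c" "fac w i j ! (Suc e - i - D) = (\<not>c)"
    using i j ej D br by (auto simp: nth_fac)
qed

lemma lyndon_fac_bigger_break:
  assumes i: "1 \<le> i" and el: "Suc e \<le> length w" and per: "has_period_in w D i e" and D: "0 < D" "i + D \<le> Suc e"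
    and ly: "lyndon c (fac w i (i + D - 1))"
    and br: "nth1 w (Suc e) = (\<not>c)" "nth1 w (Suc e - D) = c"
  shows "lyndon c (fac w i (Suc e))"
proof (rule lyndon_bigger_break[where D=D and N="Suc e - i"])
  have "D \<le> Suc (Suc e) - i" "Suc (i + D - 1) - i = D" using D i by auto
  then have "take D (fac w i (Suc e)) = fac w i (i + D - 1)" unfolding fac_def by (simp add: min_def)
  then show "lyndon c (take D (fac w i (Suc e)))" using ly by simp
  show "0 < D" "D \<le> Suc e - i" "length (fac w i (Suc e)) = Suc (Suc e - i)" using i el D by (auto simp: length_fac)
  show "\<forall>k. k + D < Suc e - i \<longrightarrow> fac w i (Suc e) ! (k + D) = fac w i (Suc e) ! k"
    using nth_fac_period[OF per i el] by simp
  show "fac w i (Suc e) ! (Suc e - i) = (\<not>c)" "fac w i (Suc e) ! (Suc e - i - D) = c"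
    using i el D br by (auto simp: nth_fac)
qed

lemma lyndon_fac_first_last:
  assumes i: "1 \<le> i" and j: "j \<le> length w" and ij: "i < j" and ly: "lyndon c (fac w i j)"
  shows "nth1 w i = c \<and> nth1 w j = (\<not>c)"
  using lyndon_first_last[OF ly] i j ij by (simp add: length_fac nth_fac)

section \<open>The Lyndon root, its period and its run\<close>

lemma Lw_eqI:
  assumes i: "1 \<le> i" and L: "i \<le> L" "L \<le> length w" and ly: "lyndon (cw w i) (fac w i L)"
    and beyond: "\<And>j. L < j \<Longrightarrow> j \<le> length w \<Longrightarrow> \<not> lyndon (cw w i) (fac w i j)"
  shows "Lw w i = L"
  unfolding Lw_def
proof (rule Max_eqI)
  show "finite {j. i \<le> j \<and> j \<le> length w \<and> lyndon (cw w i) (fac w i j)}" by simp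
  show "L \<in> {j. i \<le> j \<and> j \<le> length w \<and> lyndon (cw w i) (fac w i j)}" using L ly by simp
qed (use beyond in \<open>force simp: not_le[symmetric]\<close>)

context
  fixes w :: "bool list" and i :: nat
  assumes i: "1 \<le> i" "i \<le> length w"
begin

private lemma Lw_in_set: "Lw w i \<in> {j. i \<le> j \<and> j \<le> length w \<and> lyndon (cw w i) (fac w i j)}"
proof -
  have "i \<in> {j. i \<le> j \<and> j \<le> length w \<and> lyndon (cw w i) (fac w i j)}"
    using i lyndon_singleton by (simp add: length_fac)
  then show ?thesis unfolding Lw_def by (intro Max_in) auto
qed

lemma Lw_ge: "i \<le> Lw w i"
  using Lw_in_set by simp

lemma Lw_le_length: "Lw w i \<le> length w"
  using Lw_in_set by simp

lemma lyndon_fac_Lw: "lyndon (cw w i) (fac w i (Lw w i))"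
  using Lw_in_set by simp

lemma not_lyndon_fac_beyond_Lw:
  assumes "Lw w i < j" "j \<le> length w"
  shows "\<not> lyndon (cw w i) (fac w i j)"
proof
  assume "lyndon (cw w i) (fac w i j)"
  then have "j \<le> Lw w i" unfolding Lw_def using assms Lw_ge by (intro Max_ge) simp_all
  then show False using assms by simp
qed

lemma Lw_Dw: "Lw w i = i + Dw w i - 1"
  using Lw_ge by (simp add: Dw_def)

lemma Dw_pos: "1 \<le> Dw w i"
  by (simp add: Dw_def)

private lemma Sw_Min: "Sw w i = Min {j. 1 \<le> j \<and> j \<le> Lw w i \<and> has_period_in w (Dw w i) j (Lw w i)}"
  unfolding Sw_def using is_period_fac_iff[of _ "Lw w i" w] Lw_le_length Dw_pos
  by (metis (lifting) order_trans)

private lemma Sw_set_has_i: "i \<in> {j. 1 \<le> j \<and> j \<le> Lw w i \<and> has_period_in w (Dw w i) j (Lw w i)}"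
  using i Lw_ge Lw_Dw unfolding has_period_in_def by auto

lemma Sw_le: "Sw w i \<le> i"
  unfolding Sw_Min using Sw_set_has_i by (intro Min_le) auto

private lemma Sw_in_set: "Sw w i \<in> {j. 1 \<le> j \<and> j \<le> Lw w i \<and> has_period_in w (Dw w i) j (Lw w i)}"
  unfolding Sw_Min using Sw_set_has_i by (intro Min_in) auto

lemma Sw_ge_1: "1 \<le> Sw w i"
  using Sw_in_set by simp

lemma has_period_in_Sw_Lw: "has_period_in w (Dw w i) (Sw w i) (Lw w i)"
  using Sw_in_set by simp

private lemma Ew_Max: "Ew w i = Max {j. i \<le> j \<and> j \<le> length w \<and> has_period_in w (Dw w i) i j}"
  unfolding Ew_def using is_period_fac_iff[of i _ w] i Dw_pos by metis

private lemma Ew_set_has_Lw: "Lw w i \<in> {j. i \<le> j \<and> j \<le> length w \<and> has_period_in w (Dw w i) i j}"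
  using i Lw_ge Lw_le_length Lw_Dw unfolding has_period_in_def by auto

lemma Lw_le_Ew: "Lw w i \<le> Ew w i"
  unfolding Ew_Max using Ew_set_has_Lw by (intro Max_ge) auto

private lemma Ew_in_set: "Ew w i \<in> {j. i \<le> j \<and> j \<le> length w \<and> has_period_in w (Dw w i) i j}"
  unfolding Ew_Max using Ew_set_has_Lw by (intro Max_in) auto

lemma Ew_le_length: "Ew w i \<le> length w"
  using Ew_in_set by simp

lemma has_period_in_Ew: "has_period_in w (Dw w i) i (Ew w i)"
  using Ew_in_set by simp

lemma Ew_right_maximal: "Ew w i = length w \<or> nth1 w (Suc (Ew w i)) \<noteq> nth1 w (Suc (Ew w i) - Dw w i)"
proof (rule ccontr)
  let ?E = "Ew w i" and ?D = "Dw w i"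
  assume "\<not> ?thesis"
  then have E: "?E < length w" "nth1 w (Suc ?E) = nth1 w (Suc ?E - ?D)" using Ew_le_length by auto
  have "has_period_in w ?D i (Suc ?E)"
    using has_period_in_extend[OF has_period_in_Ew E(2)] Lw_le_Ew Lw_Dw Dw_pos by simp
  then have "Suc ?E \<in> {j. i \<le> j \<and> j \<le> length w \<and> has_period_in w ?D i j}"
    using E Ew_in_set by auto
  then have "Suc ?E \<le> ?E" unfolding Ew_Max by (intro Max_ge) auto
  then show False by simp
qed

lemma Sw_eqI:
  assumes S: "1 \<le> S" "S \<le> i" and per: "has_period_in w (Dw w i) S (Lw w i)"
    and left: "S = 1 \<or> nth1 w (S - 1) \<noteq> nth1 w (S - 1 + Dw w i)"
  shows "Sw w i = S"
proof (rule antisym)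
  show "Sw w i \<le> S" unfolding Sw_Min using S per Lw_ge by (intro Min_le) auto
  show "S \<le> Sw w i"
  proof (rule ccontr)
    assume "\<not> S \<le> Sw w i"
    then have "Sw w i \<le> S - 1" "S \<noteq> 1" "S - 1 + Dw w i \<le> Lw w i"
      using S Lw_Dw Sw_ge_1 by auto
    then show False using has_period_in_Sw_Lw left unfolding has_period_in_def by auto
  qed
qed

lemma Ew_eqI:
  assumes E: "Lw w i \<le> E" "E \<le> length w" and per: "has_period_in w (Dw w i) i E"
    and right: "E = length w \<or> nth1 w (Suc E) \<noteq> nth1 w (Suc E - Dw w i)"
  shows "Ew w i = E"
proof (rule antisym)
  show "E \<le> Ew w i" unfolding Ew_Max using E per Lw_ge by (intro Max_ge) auto
  show "Ew w i \<le> E"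
  proof (rule ccontr)
    assume "\<not> Ew w i \<le> E"
    then have "Suc E \<le> Ew w i" "E \<noteq> length w" "i \<le> Suc E - Dw w i" "Suc E - Dw w i + Dw w i = Suc E"
      using E Lw_Dw Dw_pos Ew_le_length by auto
    then show False using has_period_in_Ew right unfolding has_period_in_def by metis
  qed
qed

text \<open>If the larger letter broke the period, the Lyndon root would extend to a longer Lyndon factor.\<close>

lemma Ew_break_letters:
  assumes E: "Ew w i < length w"
  shows "nth1 w (Suc (Ew w i)) = cw w i \<and> nth1 w (Suc (Ew w i) - Dw w i) = (\<not> cw w i)"
proof (rule ccontr)
  assume "\<not> ?thesis"
  then have br: "nth1 w (Suc (Ew w i)) = (\<not> cw w i)" "nth1 w (Suc (Ew w i) - Dw w i) = cw w i"
    using Ew_right_maximal E by auto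
  have "lyndon (cw w i) (fac w i (Suc (Ew w i)))"
  proof (rule lyndon_fac_bigger_break[OF i(1) _ has_period_in_Ew _ _ _ br])
    show "Suc (Ew w i) \<le> length w" using E by simp
    show "0 < Dw w i" "i + Dw w i \<le> Suc (Ew w i)" using Dw_pos Lw_Dw Lw_le_Ew by auto
    show "lyndon (cw w i) (fac w i (i + Dw w i - 1))" using lyndon_fac_Lw Lw_Dw by simp
  qed
  then show False using not_lyndon_fac_beyond_Lw[of "Suc (Ew w i)"] Lw_le_Ew E by simp
qed

end

section \<open>Appending a letter\<close>

lemma cw_append: "2 \<le> i \<Longrightarrow> i \<le> Suc (length v) \<Longrightarrow> cw (v @ u) i = cw v i"
  unfolding cw_def using nth1_append[of "i - 1" v u] by simp

lemma lyndon_fac_append_iff: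
  "2 \<le> i \<Longrightarrow> i \<le> length v \<Longrightarrow> j \<le> length v \<Longrightarrow>
   lyndon (cw (v @ u) i) (fac (v @ u) i j) \<longleftrightarrow> lyndon (cw v i) (fac v i j)"
  by (simp add: cw_append fac_append)

lemma Sw_append:
  assumes L: "Lw (v @ [a]) i = Lw v i" "Lw v i \<le> length v"
  shows "Sw (v @ [a]) i = Sw v i"
proof -
  have "{j. 1 \<le> j \<and> j \<le> Lw (v @ [a]) i \<and> is_period (fac (v @ [a]) j (Lw (v @ [a]) i)) (Dw (v @ [a]) i)}
      = {j. 1 \<le> j \<and> j \<le> Lw v i \<and> is_period (fac v j (Lw v i)) (Dw v i)}"
    using L fac_append[of _ "Lw v i" v "[a]"] by (auto simp: Dw_def)
  then show ?thesis unfolding Sw_def by simp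
qed

lemma root_append:
  assumes i: "2 \<le> i" "i \<le> length v"
    and not_ly: "\<not> lyndon (cw v i) (fac (v @ [a]) i (Suc (length v)))"
  shows "Lw (v @ [a]) i = Lw v i" "Dw (v @ [a]) i = Dw v i" "Sw (v @ [a]) i = Sw v i"
proof -
  have i1: "1 \<le> i" "i \<le> length v" using i by auto
  show L: "Lw (v @ [a]) i = Lw v i"
  proof (rule Lw_eqI)
    show "1 \<le> i" "i \<le> Lw v i" "Lw v i \<le> length (v @ [a])" using i1 Lw_ge[OF i1] Lw_le_length[OF i1] by auto
    show "lyndon (cw (v @ [a]) i) (fac (v @ [a]) i (Lw v i))"
      using lyndon_fac_append_iff[OF i Lw_le_length[OF i1]] lyndon_fac_Lw[OF i1] by simp
    fix j assume j: "Lw v i < j" "j \<le> length (v @ [a])"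
    show "\<not> lyndon (cw (v @ [a]) i) (fac (v @ [a]) i j)"
    proof (cases "j \<le> length v")
      case True
      then show ?thesis using lyndon_fac_append_iff[OF i True] not_lyndon_fac_beyond_Lw[OF i1 j(1)] by simp
    next
      case False
      then have "j = Suc (length v)" using j by simp
      then show ?thesis using not_ly cw_append[of i v "[a]"] i by simp
    qed
  qed
  then show "Dw (v @ [a]) i = Dw v i" by (simp add: Dw_def)
  show "Sw (v @ [a]) i = Sw v i" using Sw_append L Lw_le_length[OF i1] by blast
qed

lemma Lw_append_le:
  assumes i: "2 \<le> i" "i \<le> length v" and L: "Lw (v @ [a]) i \<le> length v"
  shows "Lw v i = Lw (v @ [a]) i"
proof (rule Lw_eqI)
  have i1: "1 \<le> i" "i \<le> length (v @ [a])" using i by auto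
  show "1 \<le> i" "i \<le> Lw (v @ [a]) i" "Lw (v @ [a]) i \<le> length v" using i1 Lw_ge[OF i1] L by auto
  show "lyndon (cw v i) (fac v i (Lw (v @ [a]) i))"
    using lyndon_fac_Lw[OF i1] lyndon_fac_append_iff[OF i L] by simp
  fix j assume j: "Lw (v @ [a]) i < j" "j \<le> length v"
  then show "\<not> lyndon (cw v i) (fac v i j)"
    using not_lyndon_fac_beyond_Lw[OF i1 j(1)] lyndon_fac_append_iff[OF i j(2)] by simp
qed

lemma is_run_iff:
  "is_run w (S, E) \<longleftrightarrow> 1 \<le> S \<and> S < E \<and> E \<le> length w \<and>
   2 * least_period (fac w S E) \<le> E - S + 1 \<and>
   (S = 1 \<or> nth1 w (S - 1) \<noteq> nth1 w (S - 1 + least_period (fac w S E))) \<and>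
   (E = length w \<or> nth1 w (E + 1) \<noteq> nth1 w (E + 1 - least_period (fac w S E)))"
  by (simp add: is_run_def Let_def)

lemma least_period_pos: "1 \<le> S \<Longrightarrow> S \<le> E \<Longrightarrow> E \<le> length w \<Longrightarrow> 1 \<le> least_period (fac w S E)"
proof -
  assume "1 \<le> S" "S \<le> E" "E \<le> length w"
  then have "is_period (fac w S E) (E - S + 1)" unfolding is_period_def by (auto simp: length_fac)
  then have "is_period (fac w S E) (least_period (fac w S E))" unfolding least_period_def by (rule LeastI)
  then show ?thesis by (simp add: is_period_def)
qed

lemma is_run_append:
  assumes E: "Suc E \<le> length v"
  shows "is_run (v @ u) (S, E) = is_run v (S, E)"
proof (cases "1 \<le> S \<and> S < E")
  case True
  define p where "p = least_period (fac v S E)"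
  have f: "fac (v @ u) S E = fac v S E" using True E by (intro fac_append) auto
  have p1: "1 \<le> p" using least_period_pos[of S E v] True E by (simp add: p_def)
  have "nth1 (v @ u) k = nth1 v k" if "1 \<le> k" "k \<le> Suc E" for k
    using that E by (intro nth1_append) auto
  then have "(S = 1 \<or> nth1 (v @ u) (S - 1) \<noteq> nth1 (v @ u) (S - 1 + p)) \<longleftrightarrow>
      (S = 1 \<or> nth1 v (S - 1) \<noteq> nth1 v (S - 1 + p))"
    and "(nth1 (v @ u) (E + 1) \<noteq> nth1 (v @ u) (E + 1 - p)) \<longleftrightarrow> (nth1 v (E + 1) \<noteq> nth1 v (E + 1 - p))"
    if "2 * p \<le> E - S + 1"
    using that True p1 by auto
  moreover have "E \<noteq> length (v @ u)" "E \<noteq> length v" using E by auto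
  ultimately show ?thesis unfolding is_run_iff f p_def[symmetric] using True E by auto
qed (auto simp: is_run_def)

section \<open>Runs reaching the end of the word\<close>

lemma least_period_eq_lyndon_root:
  assumes S: "1 \<le> S" and E: "E \<le> length w" and D: "0 < D" and per: "has_period_in w D S E"
    and x: "S \<le> x" "x + D \<le> Suc E" and ly: "lyndon c (fac w x (x + D - 1))"
  shows "least_period (fac w S E) = D"
  unfolding least_period_def
proof (rule Least_equality)
  show "is_period (fac w S E) D" using is_period_fac_iff[OF S E] per D by simp
  fix q assume "is_period (fac w S E) q"
  then have q: "1 \<le> q" "has_period_in w q S E" using is_period_fac_iff[OF S E] by auto
  show "D \<le> q"
  proof (rule ccontr)
    assume "\<not> D \<le> q"
    moreover have "has_period_in w q x (x + D - 1)" using has_period_in_mono[OF q(2)] x by simp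
    moreover have "x + D - 1 \<le> length w" "1 \<le> x" using x S E D by auto
    ultimately show False using lyndon_fac_no_period[OF _ _ ly, of q] q(1) D by simp
  qed
qed

definition periodic_run :: "bool list \<Rightarrow> nat \<Rightarrow> nat \<Rightarrow> nat \<Rightarrow> bool" where
  "periodic_run w S E D \<longleftrightarrow> 1 \<le> S \<and> E \<le> length w \<and> 1 \<le> D \<and> has_period_in w D S E \<and>
     2 * D \<le> E - S + 1 \<and> (S = 1 \<or> nth1 w (S - 1) \<noteq> nth1 w (S - 1 + D)) \<and> least_period (fac w S E) = D"

lemma periodic_runD:
  assumes "periodic_run w S E D"
  shows "1 \<le> S" "E \<le> length w" "1 \<le> D" "has_period_in w D S E" "2 * D \<le> E - S + 1"
    "S = 1 \<or> nth1 w (S - 1) \<noteq> nth1 w (S - 1 + D)" "least_period (fac w S E) = D"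
  using assms unfolding periodic_run_def by auto

lemma periodic_run_Rw:
  assumes i: "2 \<le> i" "i \<le> length v" and E: "Ew v i = length v" and run: "is_run v (Rw v i)"
    and iD: "i + Dw v i \<le> Ew v i" and Si: "Sw v i < i"
  shows "periodic_run v (Sw v i) (length v) (Dw v i)"
proof -
  have i1: "1 \<le> i" "i \<le> length v" using i by auto
  have per: "has_period_in v (Dw v i) (Sw v i) (length v)"
    using has_period_in_union[OF has_period_in_Sw_Lw[OF i1] has_period_in_Ew[OF i1]] Lw_Dw[OF i1] E by simp
  have "least_period (fac v (Sw v i) (length v)) = Dw v i"
  proof (rule least_period_eq_lyndon_root[OF Sw_ge_1[OF i1] _ _ per])
    show "0 < Dw v i" "Sw v i \<le> i" "i + Dw v i \<le> Suc (length v)"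
      using Dw_pos[OF i1] Sw_le[OF i1] iD E by auto
    show "lyndon (cw v i) (fac v i (i + Dw v i - 1))" using lyndon_fac_Lw[OF i1] Lw_Dw[OF i1] by simp
  qed simp
  then show ?thesis
    unfolding periodic_run_def using Sw_ge_1[OF i1] Dw_pos[OF i1] per run E Sw_ge_1[OF i1]
    by (auto simp: Rw_def is_run_iff)
qed

lemma Dw_in_periodic_run:
  assumes run: "periodic_run w S E D" and j: "2 \<le> j" "j \<le> length w" and R: "Rw w j = (S, E)"
  shows "Dw w j = D" "Lw w j = j + D - 1" "S \<le> j"
proof -
  have j1: "1 \<le> j" "j \<le> length w" using j by auto
  have SE: "Sw w j = S" "Ew w j = E" using R by (auto simp: Rw_def)
  note R = periodic_runD[OF run]
  show Sj: "S \<le> j" using Sw_le[OF j1] SE by simp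
  have "has_period_in w (Dw w j) S E"
    using has_period_in_union[OF has_period_in_Sw_Lw[OF j1] has_period_in_Ew[OF j1]] Lw_Dw[OF j1] SE by simp
  then have "D \<le> Dw w j"
    using R(7) is_period_fac_iff[OF R(1,2)] Dw_pos[OF j1] unfolding least_period_def by (metis Least_le)
  moreover have "\<not> D < Dw w j"
  proof
    assume "D < Dw w j"
    moreover have "has_period_in w D j (Lw w j)"
      using has_period_in_mono[OF R(4) Sj] Lw_le_Ew[OF j1] SE by simp
    ultimately show False
      using lyndon_fac_no_period[OF j1(1) Lw_le_length[OF j1] lyndon_fac_Lw[OF j1], of D] Lw_Dw[OF j1] R(3)
      by simp
  qed
  ultimately show D: "Dw w j = D" by simp
  show "Lw w j = j + D - 1" using Lw_Dw[OF j1] D by simp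
qed

lemma root_in_periodic_run:
  assumes run: "periodic_run w S E D" and x: "S < x" "x + D \<le> Suc E" and D2: "2 \<le> D"
    and ly: "lyndon c (fac w x (x + D - 1))"
    and right: "E = length w \<or> (nth1 w (Suc E) = c \<and> nth1 w (Suc E - D) = (\<not> c))"
  shows "cw w x = c" "Lw w x = x + D - 1" "Dw w x = D" "Sw w x = S" "Ew w x = E"
proof -
  note R = periodic_runD[OF run]
  have x1: "1 \<le> x" "x \<le> length w" using x R D2 by auto
  have "nth1 w (x + D - 1) = (\<not> c)"
    using lyndon_fac_first_last[OF x1(1) _ _ ly] x R D2 by simp
  moreover have "S \<le> x - 1" "x - 1 + D \<le> E" "x - 1 + D = x + D - 1" using x R D2 by auto
  then have "nth1 w (x + D - 1) = nth1 w (x - 1)"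
    using R(4) unfolding has_period_in_def by metis
  ultimately show cwx: "cw w x = c" unfolding cw_def by auto
  show Lx: "Lw w x = x + D - 1"
  proof (rule Lw_eqI[OF x1(1)])
    show "x \<le> x + D - 1" "x + D - 1 \<le> length w" "lyndon (cw w x) (fac w x (x + D - 1))"
      using x D2 R ly cwx by auto
    fix j assume j: "x + D - 1 < j" "j \<le> length w"
    show "\<not> lyndon (cw w x) (fac w x j)"
    proof (cases "j \<le> E")
      case True
      show ?thesis
      proof
        assume "lyndon (cw w x) (fac w x j)"
        moreover have "has_period_in w D x j" using has_period_in_mono[OF R(4)] x True by simp
        moreover have "D < Suc j - x" using j D2 by linarith
        ultimately show False using lyndon_fac_no_period[OF x1(1) j(2), of "cw w x" D] D2 by simp
      qed
    next
      case False
      then have br: "nth1 w (Suc E) = c" "nth1 w (Suc E - D) = (\<not> c)" using right j by auto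
      have "\<not> lyndon c (fac w x j)"
        by (rule not_lyndon_fac_smaller_break[OF x1(1) j(2) has_period_in_mono[OF R(4)] _ _ _ br])
          (use x D2 False in auto)
      then show ?thesis using cwx by simp
    qed
  qed
  show Dx: "Dw w x = D" using Lx x D2 by (simp add: Dw_def)
  show "Sw w x = S"
    using Sw_eqI[OF x1] has_period_in_mono[OF R(4)] R(1,6) Lx Dx x by simp
  show "Ew w x = E"
    using Ew_eqI[OF x1] has_period_in_mono[OF R(4)] R(2) right Lx Dx x by auto
qed

lemma is_run_append_break:
  assumes run: "periodic_run v S (length v) D" and a: "a \<noteq> nth1 v (Suc (length v) - D)"
  shows "is_run (v @ [a]) (S, length v)"
proof -
  note R = periodic_runD[OF run]
  let ?u = "v @ [a]"
  have f: "fac ?u S (length v) = fac v S (length v)" using R by (intro fac_append) auto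
  have "S = 1 \<or> nth1 ?u (S - 1) \<noteq> nth1 ?u (S - 1 + D)"
    using R by (auto simp: nth1_append)
  moreover have "nth1 ?u (length v + 1) \<noteq> nth1 ?u (length v + 1 - D)"
    using R a by (simp add: nth1_append nth1_append_last)
  ultimately show ?thesis unfolding is_run_iff f using R by simp
qed

lemma Inf_nat_eq_if_descending:
  fixes A B :: "nat set"
  assumes sub: "A \<subseteq> B" and desc: "\<And>m. m \<in> B \<Longrightarrow> m \<in> A \<or> (\<exists>m'\<in>B. m' < m)"
  shows "Inf B = Inf A"
proof (cases "B = {}")
  case False
  have low: "Inf B \<le> m" if "m \<in> B" for m using that by (simp add: cInf_lower)
  have "Inf B \<in> B" using False by (rule Inf_nat_def1)
  then have "Inf B \<in> A" using desc low by (meson not_le)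
  moreover then have "Inf A \<in> A" by (intro Inf_nat_def1) auto
  ultimately show ?thesis using sub low by (intro antisym) (auto simp: cInf_lower)
qed (use sub in auto)

definition rw_positions :: "bool list \<Rightarrow> nat \<times> nat \<Rightarrow> bool \<Rightarrow> nat set" where
  "rw_positions w r c = {i. 1 < i \<and> i \<le> length w \<and> Rw w i = r \<and> lyndon c (fac w i (Lw w i))}"

lemma rw_Inf: "rw w r c = Inf (rw_positions w r c)"
  unfolding rw_def rw_positions_def ..

context
  fixes v :: "bool list" and a :: bool and S D :: nat
  assumes run: "periodic_run v S (length v) D"
    and run': "periodic_run (v @ [a]) S (Suc (length v)) D"
    and D2: "2 \<le> D"
begin

private lemma rw_positions_append_subset:
  "rw_positions v (S, length v) c \<subseteq> rw_positions (v @ [a]) (S, Suc (length v)) c"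
proof
  fix j assume "j \<in> rw_positions v (S, length v) c"
  then have j: "2 \<le> j" "j \<le> length v" "Rw v j = (S, length v)" "lyndon c (fac v j (Lw v j))"
    by (auto simp: rw_positions_def)
  have j1: "1 \<le> j" "j \<le> length v" using j by auto
  note D = Dw_in_periodic_run[OF run j(1,2,3)]
  note R' = periodic_runD[OF run']
  have not_ly: "\<not> lyndon (cw v j) (fac (v @ [a]) j (Suc (length v)))"
  proof
    assume ly: "lyndon (cw v j) (fac (v @ [a]) j (Suc (length v)))"
    have "has_period_in (v @ [a]) D j (Suc (length v))" using has_period_in_mono[OF R'(4) D(3)] by simp
    moreover have "D < Suc (Suc (length v)) - j" using D Lw_le_length[OF j1] D2 by linarith
    ultimately show False using lyndon_fac_no_period[OF j1(1) _ ly, of D] R'(3) by simp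
  qed
  note root = root_append[OF j(1,2) not_ly]
  have "Ew (v @ [a]) j = Suc (length v)"
    using Ew_eqI[of j "v @ [a]"] j1 root has_period_in_mono[OF R'(4) D(3)] Lw_le_length[OF j1] D by simp
  moreover have "fac (v @ [a]) j (Lw (v @ [a]) j) = fac v j (Lw v j)"
    using root fac_append j1 Lw_le_length[OF j1] by simp
  ultimately show "j \<in> rw_positions (v @ [a]) (S, Suc (length v)) c"
    using j root unfolding rw_positions_def by (simp add: Rw_def)
qed

text \<open>A position that is new in the longer run has its root ending at the new letter; the same
  root occurs \<open>D\<close> positions earlier.\<close>

private lemma rw_positions_append_descend:
  assumes m: "m \<in> rw_positions (v @ [a]) (S, Suc (length v)) c"
  shows "m \<in> rw_positions v (S, length v) c \<or> (\<exists>m' \<in> rw_positions (v @ [a]) (S, Suc (length v)) c. m' < m)"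
proof -
  let ?u = "v @ [a]" and ?n = "length v"
  have m2: "2 \<le> m" "m \<le> length ?u" "Rw ?u m = (S, Suc ?n)" "lyndon c (fac ?u m (Lw ?u m))"
    using m by (auto simp: rw_positions_def)
  have m1: "1 \<le> m" "m \<le> length ?u" using m2 by auto
  note X = Dw_in_periodic_run[OF run' m2(1,2,3)]
  note R = periodic_runD[OF run] and R' = periodic_runD[OF run']
  show ?thesis
  proof (cases "m + D - 1 \<le> ?n")
    case True
    have mn: "m \<le> ?n" using True D2 by simp
    have Lv: "Lw v m = Lw ?u m" using Lw_append_le[OF m2(1) mn, of a] True X by simp
    have Sv: "Sw ?u m = Sw v m" using Sw_append[of v a m] Lv True X by simp
    have Dv: "Dw v m = D" using Lv X by (simp add: Dw_def)
    have "Ew v m = ?n"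
      using Ew_eqI[of m v] m2 mn Lv Dv X True has_period_in_mono[OF R(4) X(3)] by simp
    moreover have "fac ?u m (Lw ?u m) = fac v m (Lw v m)" using Lv fac_append m1 True X by simp
    ultimately have "m \<in> rw_positions v (S, ?n) c"
      using m2 mn Sv unfolding rw_positions_def by (simp add: Rw_def)
    then show ?thesis by simp
  next
    case False
    then have mD: "m + D - 1 = Suc ?n" using Lw_le_length[OF m1] X by simp
    define m' where "m' = m - D"
    have m': "S < m'" "m = m' + D" using mD R by (auto simp: m'_def)
    have same_root: "fac ?u m' (m' + D - 1) = fac ?u m (m + D - 1)"
      by (rule fac_period_root_eq[OF R'(4)]) (use R' m' mD X in auto)
    have lym: "lyndon (cw ?u m) (fac ?u m' (m' + D - 1))" using lyndon_fac_Lw[OF m1] X same_root by simp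
    have "m' + D \<le> Suc (Suc ?n)" using m' mD by simp
    note Y = root_in_periodic_run[OF run' m'(1) this D2 lym]
    have "lyndon c (fac ?u m' (Lw ?u m'))" using Y(2) same_root m2(4) X(2) by simp
    moreover have "1 < m'" "m' \<le> length ?u" using m' mD R by auto
    ultimately have "m' \<in> rw_positions ?u (S, Suc ?n) c"
      using Y(4,5) unfolding rw_positions_def by (simp add: Rw_def)
    moreover have "m' < m" using m' R by simp
    ultimately show ?thesis by blast
  qed
qed

lemma rw_append_period_continues: "rw (v @ [a]) (S, Suc (length v)) c = rw v (S, length v) c"
  unfolding rw_Inf using rw_positions_append_subset rw_positions_append_descend
  by (rule Inf_nat_eq_if_descending)

end

lemma fw_append_period_continues:
  assumes run: "periodic_run v S (length v) D" and run': "periodic_run (v @ [a]) S (Suc (length v)) D"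
  shows "fw (v @ [a]) (S, Suc (length v)) = fw v (S, length v)"
  using rw_append_period_continues[OF run run'] periodic_runD(3,7)[OF run] periodic_runD(7)[OF run']
  by (cases "D = 1") (auto simp: fw_def)

section \<open>Lost positions under appending a letter\<close>

lemma lost_iff:
  "lost w i \<longleftrightarrow> 2 \<le> i \<and> i \<le> length w \<and>
     (if Ew w i < length w
      then (Sw w i > 1 \<and> \<not> is_run w (Rw w i)) \<or> (is_run w (Rw w i) \<and> i + Dw w i \<le> Ew w i)
      else is_run w (Rw w i) \<and> i + Dw w i \<le> Ew w i \<and> Sw w i < i \<and>
        lyndon (fw w (Rw w i)) (fac w i (Lw w i)))"
  using Ew_le_length[of i w] unfolding lost_def by auto

lemma lost_append_Ew_less:
  assumes lost: "lost v i" and E: "Ew v i < length v"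
  shows "lost (v @ [a]) i"
proof -
  let ?u = "v @ [a]" and ?D = "Dw v i" and ?E = "Ew v i" and ?c = "cw v i"
  have i: "2 \<le> i" "i \<le> length v" using lost unfolding lost_def by auto
  have i1: "1 \<le> i" "i \<le> length v" using i by auto
  have per: "has_period_in ?u ?D i ?E"
    using has_period_in_append[OF has_period_in_Ew[OF i1]] E i by simp
  have "nth1 v (Suc ?E) = ?c" "nth1 v (Suc ?E - ?D) = (\<not> ?c)" using Ew_break_letters[OF i1 E] by auto
  moreover have "Suc ?E - ?D \<ge> 1" "Suc ?E - ?D \<le> length v"
    using Lw_le_Ew[OF i1] Lw_Dw[OF i1] i E by auto
  ultimately have br: "nth1 ?u (Suc ?E) = ?c" "nth1 ?u (Suc ?E - ?D) = (\<not> ?c)"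
    using E by (simp_all add: nth1_append)
  have "\<not> lyndon ?c (fac ?u i (Suc (length v)))"
    by (rule not_lyndon_fac_smaller_break[OF i1(1) _ per _ _ _ br])
      (use Dw_pos[OF i1] Lw_le_Ew[OF i1] Lw_Dw[OF i1] E in auto)
  note root = root_append[OF i this]
  have Eu: "Ew ?u i = ?E"
    using Ew_eqI[of i ?u] i1 root Lw_le_Ew[OF i1] E per br by simp
  have "is_run ?u (Rw v i) = is_run v (Rw v i)" using is_run_append E by (simp add: Rw_def)
  moreover have "Rw ?u i = Rw v i" using root Eu by (simp add: Rw_def)
  ultimately show ?thesis using lost E i Eu root unfolding lost_iff by auto
qed

lemma lost_append_period_continues:
  assumes lost: "lost v i" and E: "Ew v i = length v" and a: "a = nth1 v (Suc (length v) - Dw v i)"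
  shows "lost (v @ [a]) i"
proof -
  let ?u = "v @ [a]" and ?n = "length v" and ?S = "Sw v i" and ?D = "Dw v i"
  have i: "2 \<le> i" "i \<le> length v" and run: "is_run v (Rw v i)" and iD: "i + ?D \<le> Ew v i"
    and Si: "?S < i" and ly_f: "lyndon (fw v (Rw v i)) (fac v i (Lw v i))"
    using lost E unfolding lost_iff by auto
  have i1: "1 \<le> i" "i \<le> length v" using i by auto
  have prun: "periodic_run v ?S ?n ?D" using periodic_run_Rw[OF i E run iD Si] .
  note R = periodic_runD[OF prun]
  have "nth1 ?u (Suc ?n) = nth1 ?u (Suc ?n - ?D)"
    using a R by (simp add: nth1_append nth1_append_last)
  then have per: "has_period_in ?u ?D ?S (Suc ?n)"
    using has_period_in_extend[OF has_period_in_append[OF R(4)]] R by simp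
  have root_u: "lyndon (cw v i) (fac ?u i (i + ?D - 1))"
    using lyndon_fac_Lw[OF i1] Lw_Dw[OF i1] fac_append[of i "i + ?D - 1" v "[a]"] iD E i by simp
  have lp: "least_period (fac ?u ?S (Suc ?n)) = ?D"
    by (rule least_period_eq_lyndon_root[OF R(1) _ _ per _ _ root_u]) (use R Si iD E in auto)
  have left: "?S = 1 \<or> nth1 ?u (?S - 1) \<noteq> nth1 ?u (?S - 1 + ?D)"
    using R Si iD E i by (auto simp: nth1_append)
  have prun_u: "periodic_run ?u ?S (Suc ?n) ?D"
    unfolding periodic_run_def using R per lp left by auto
  have "\<not> lyndon (cw v i) (fac ?u i (Suc ?n))"
  proof
    assume "lyndon (cw v i) (fac ?u i (Suc ?n))"
    moreover have "has_period_in ?u ?D i (Suc ?n)" using has_period_in_mono[OF per] Si by simp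
    moreover have "?D < Suc (Suc ?n) - i" using iD E by simp
    ultimately show False using lyndon_fac_no_period[OF i1(1), of "Suc ?n" ?u "cw v i" ?D] iD E R by simp
  qed
  note root = root_append[OF i this]
  have Eu: "Ew ?u i = Suc ?n"
    using Ew_eqI[of i ?u] i1 root Lw_le_length[OF i1] has_period_in_mono[OF per] Si by simp
  have Ru: "Rw ?u i = (?S, Suc ?n)" and Rv: "Rw v i = (?S, ?n)" using root Eu E by (auto simp: Rw_def)
  have "is_run ?u (?S, Suc ?n)"
    unfolding is_run_iff using R lp left Si i by auto
  moreover have "fac ?u i (Lw ?u i) = fac v i (Lw v i)"
    using root fac_append i1 Lw_le_length[OF i1] by simp
  moreover have "fw ?u (?S, Suc ?n) = fw v (?S, ?n)"
    using fw_append_period_continues[OF prun prun_u] .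
  ultimately show ?thesis using ly_f Ru Rv Eu root i iD E Si unfolding lost_iff by auto
qed

lemma lost_append_smaller_break:
  assumes lost: "lost v i" and E: "Ew v i = length v"
    and a: "a \<noteq> nth1 v (Suc (length v) - Dw v i)" "a = cw v i"
  shows "lost (v @ [a]) i"
proof -
  let ?u = "v @ [a]" and ?n = "length v" and ?S = "Sw v i" and ?D = "Dw v i" and ?c = "cw v i"
  have i: "2 \<le> i" "i \<le> length v" and run: "is_run v (Rw v i)" and iD: "i + ?D \<le> Ew v i"
    and Si: "?S < i"
    using lost E unfolding lost_iff by auto
  have i1: "1 \<le> i" "i \<le> length v" using i by auto
  have prun: "periodic_run v ?S ?n ?D" using periodic_run_Rw[OF i E run iD Si] .
  note R = periodic_runD[OF prun]
  have br: "nth1 ?u (Suc ?n) = ?c" "nth1 ?u (Suc ?n - ?D) = (\<not> ?c)"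
    using a R by (auto simp: nth1_append nth1_append_last)
  have per: "has_period_in ?u ?D i ?n"
    using has_period_in_append[OF has_period_in_mono[OF R(4)]] R Si by simp
  have "\<not> lyndon ?c (fac ?u i (Suc ?n))"
    by (rule not_lyndon_fac_smaller_break[OF i1(1) _ per _ _ _ br]) (use R iD E in auto)
  note root = root_append[OF i this]
  have Eu: "Ew ?u i = ?n"
    using Ew_eqI[of i ?u] i1 root Lw_le_length[OF i1] per br by simp
  have "is_run ?u (?S, ?n)" using is_run_append_break[OF prun a(1)] .
  moreover have "Rw ?u i = (?S, ?n)" using root Eu by (simp add: Rw_def)
  ultimately show ?thesis using i iD E Eu root unfolding lost_iff by auto
qed

lemma conjugate_lyndon_root_in_periodic_run:
  assumes run: "periodic_run v S E D" and D2: "2 \<le> D" and i: "S < i" "i + D \<le> E"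
    and ly: "lyndon f (fac v i (i + D - 1))"
  shows "\<exists>x. S < x \<and> x + D \<le> Suc E \<and> lyndon (\<not> f) (fac v x (x + D - 1))"
proof -
  note R = periodic_runD[OF run]
  define U where "U = fac v i (i + D - 1)"
  have lU: "length U = D" using i R by (simp add: U_def length_fac)
  have "U \<noteq> []" using lU D2 by auto
  moreover have "\<forall>m. 0 < m \<and> m < length U \<longrightarrow> rotate m U \<noteq> U" using lyndon_rotate ly U_def by blast
  ultimately obtain k where "k < length U" "lyndon (\<not> f) (rotate k U)" by (metis lyndon_conjugate_exists)
  then have k: "k < D" "lyndon (\<not> f) (rotate k U)" using lU by auto
  text \<open>Start from \<open>i + k\<close>, stepping back one period if that leaves the run.\<close>
  define x where "x = (if S + 1 + D \<le> i + k then i + k - D else i + k)"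
  have x: "S < x" "x + D \<le> Suc E" using k i R unfolding x_def by (auto split: if_splits)
  have "fac v x (x + D - 1) = rotate k U"
  proof (cases "S + 1 + D \<le> i + k")
    case True
    then have xx: "x = i + k - D" by (simp add: x_def)
    have "U = rotate (i - x) (fac v x (x + D - 1))"
      unfolding U_def by (rule fac_period_root_rotate[OF R(4)]) (use R x xx k i in auto)
    moreover have "i - x = D - k" using xx k True by simp
    ultimately have "rotate k U = rotate k (rotate (D - k) (fac v x (x + D - 1)))" by simp
    also have "\<dots> = rotate D (fac v x (x + D - 1))" using k by (simp add: rotate_rotate)
    also have "\<dots> = fac v x (x + D - 1)" using x R by (intro rotate_id) (simp add: length_fac)
    finally show ?thesis by simp
  next
    case False
    then have xx: "x = i + k" by (simp add: x_def)
    have "fac v x (x + D - 1) = rotate (x - i) U"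
      unfolding U_def by (rule fac_period_root_rotate[OF R(4)]) (use R x xx i in auto)
    then show ?thesis using xx by simp
  qed
  then show ?thesis using x k by auto
qed

lemma lyndon_roots_congruent:
  assumes per: "has_period_in w D s e" and D: "0 < D" and s: "1 \<le> s" and e: "e \<le> length w"
    and pq: "s \<le> p" "p \<le> q" "q + D \<le> Suc e"
    and ly: "lyndon c (fac w p (p + D - 1))" "lyndon c (fac w q (q + D - 1))"
  shows "(q - p) mod D = 0"
proof -
  have "lyndon c (rotate (q - p) (fac w p (p + D - 1)))"
    using ly(2) fac_period_root_rotate[OF per D s e pq] by simp
  then show ?thesis using lyndon_rotate_lyndon_imp_mod[OF ly(1)] pq e s by (simp add: length_fac)
qed

definition partner :: "bool list \<Rightarrow> nat \<Rightarrow> nat" where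
  "partner v i = rw v (Rw v i) (\<not> fw v (Rw v i)) + (i - rw v (Rw v i) (fw v (Rw v i)))"

context
  fixes v :: "bool list" and a :: bool and i :: nat
  assumes lost: "lost v i" and E: "Ew v i = length v"
    and a: "a \<noteq> nth1 v (Suc (length v) - Dw v i)" "a \<noteq> cw v i"
begin

private lemma i_bounds: "2 \<le> i" "i + Dw v i \<le> length v" "Sw v i < i"
  and run: "periodic_run v (Sw v i) (length v) (Dw v i)"
  and Rw_i: "Rw v i = (Sw v i, length v)"
  and lyndon_fw: "lyndon (fw v (Rw v i)) (fac v i (Lw v i))"
proof -
  have "2 \<le> i" "i \<le> length v" "is_run v (Rw v i)" "i + Dw v i \<le> Ew v i" "Sw v i < i"
    "lyndon (fw v (Rw v i)) (fac v i (Lw v i))"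
    using lost E unfolding lost_iff by auto
  then show "2 \<le> i" "i + Dw v i \<le> length v" "Sw v i < i" "periodic_run v (Sw v i) (length v) (Dw v i)"
    "lyndon (fw v (Rw v i)) (fac v i (Lw v i))"
    using periodic_run_Rw E by auto
  show "Rw v i = (Sw v i, length v)" using E by (simp add: Rw_def)
qed

private lemma i1: "1 \<le> i" "i \<le> length v"
  using i_bounds by auto

text \<open>Since \<open>a\<close> differs from both, the letter closing the last period is \<open>c_v(i)\<close>.\<close>

private lemma period_letter: "nth1 v (Suc (length v) - Dw v i) = cw v i"
  using a by auto

private lemma D2: "2 \<le> Dw v i"
proof (rule ccontr)
  assume "\<not> 2 \<le> Dw v i"
  then have D1: "Dw v i = 1" using Dw_pos[OF i1] by simp
  have "nth1 v (length v) = nth1 v (i - 1)"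
    using has_period_in_mod[OF periodic_runD(4)[OF run]] D1 i_bounds by simp
  then show False using period_letter D1 by (simp add: cw_def)
qed

private lemma fw_eq_cw: "fw v (Rw v i) = cw v i"
proof -
  have "i < Lw v i" using Lw_Dw[OF i1] D2 by simp
  then show ?thesis
    using lyndon_fac_first_last[OF i1(1) Lw_le_length[OF i1] _ lyndon_fw]
      lyndon_fac_first_last[OF i1(1) Lw_le_length[OF i1] _ lyndon_fac_Lw[OF i1]] by simp
qed

private lemma lyndon_root_i: "lyndon (cw v i) (fac v i (i + Dw v i - 1))"
  using lyndon_fac_Lw[OF i1] Lw_Dw[OF i1] by simp

private lemma rw_positions_root:
  assumes "j \<in> rw_positions v (Rw v i) c"
  shows "2 \<le> j" "Sw v i \<le> j" "j + Dw v i \<le> Suc (length v)" "Rw v j = (Sw v i, length v)"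
    "Lw v j = j + Dw v i - 1" "lyndon c (fac v j (j + Dw v i - 1))" "cw v j = c"
proof -
  have j: "2 \<le> j" "j \<le> length v" "Rw v j = (Sw v i, length v)" "lyndon c (fac v j (Lw v j))"
    using assms Rw_i by (auto simp: rw_positions_def)
  have j1: "1 \<le> j" "j \<le> length v" using j by auto
  note X = Dw_in_periodic_run[OF run j(1,2,3)]
  show "2 \<le> j" "Sw v i \<le> j" "Rw v j = (Sw v i, length v)" "Lw v j = j + Dw v i - 1"
    "lyndon c (fac v j (j + Dw v i - 1))"
    using j X by simp_all
  show "j + Dw v i \<le> Suc (length v)" using Lw_le_length[OF j1] X by simp
  have "j < Lw v j" using X D2 by simp
  then have "nth1 v j = cw v j" "nth1 v j = c"
    using lyndon_fac_first_last[OF j1(1) Lw_le_length[OF j1]] lyndon_fac_Lw[OF j1] j(4) by blast+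
  then show "cw v j = c" by simp
qed

text \<open>A \<open>\<not> f\<close>-rooted position comes from the \<open>\<not> f\<close>-Lyndon conjugate of the root; the first one
  precedes the first \<open>f\<close>-rooted position by the choice of \<open>f = f_v(R_v(i))\<close>.\<close>

private lemma rw_positions_nonempty:
  "rw v (Rw v i) (fw v (Rw v i)) \<in> rw_positions v (Rw v i) (fw v (Rw v i))"
  "rw v (Rw v i) (fw v (Rw v i)) \<le> i"
  "rw v (Rw v i) (\<not> fw v (Rw v i)) \<in> rw_positions v (Rw v i) (\<not> fw v (Rw v i))"
  "rw v (Rw v i) (\<not> fw v (Rw v i)) \<le> rw v (Rw v i) (fw v (Rw v i))"
proof -
  let ?f = "fw v (Rw v i)"
  have i_in: "i \<in> rw_positions v (Rw v i) ?f" using i_bounds i1 lyndon_fw by (simp add: rw_positions_def)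
  then show "rw v (Rw v i) ?f \<in> rw_positions v (Rw v i) ?f" "rw v (Rw v i) ?f \<le> i"
    unfolding rw_Inf by (auto intro: Inf_nat_def1 cInf_lower)
  obtain x where x: "Sw v i < x" "x + Dw v i \<le> Suc (length v)" "lyndon (\<not> ?f) (fac v x (x + Dw v i - 1))"
    using conjugate_lyndon_root_in_periodic_run[OF run D2 i_bounds(3)] i_bounds lyndon_root_i fw_eq_cw
    by fastforce
  note Y = root_in_periodic_run[OF run x(1,2) D2 x(3)]
  have "x \<in> rw_positions v (Rw v i) (\<not> ?f)"
    using x Y Rw_i periodic_runD(1)[OF run] D2 by (simp add: rw_positions_def Rw_def)
  then show "rw v (Rw v i) (\<not> ?f) \<in> rw_positions v (Rw v i) (\<not> ?f)"
    unfolding rw_Inf by (auto intro: Inf_nat_def1)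
  have "least_period (fac v (Sw v i) (length v)) \<noteq> 1" using periodic_runD(7)[OF run] D2 by simp
  then show "rw v (Rw v i) (\<not> ?f) \<le> rw v (Rw v i) ?f"
    using Rw_i by (cases "rw v (Rw v i) True \<le> rw v (Rw v i) False") (auto simp: fw_def)
qed

private lemma partner_root:
  "2 \<le> partner v i" "partner v i \<le> i" "partner v i + Dw v i \<le> length v"
  "Rw v (partner v i) = (Sw v i, length v)" "cw v (partner v i) = (\<not> cw v i)"
  "Lw v (partner v i) = partner v i + Dw v i - 1"
  "lyndon (\<not> cw v i) (fac v (partner v i) (partner v i + Dw v i - 1))"
proof -
  let ?f = "fw v (Rw v i)" and ?D = "Dw v i" and ?S = "Sw v i" and ?n = "length v"
  define rf where "rf = rw v (Rw v i) ?f"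
  define rn where "rn = rw v (Rw v i) (\<not> ?f)"
  define j where "j = partner v i"
  have j_def': "j = rn + (i - rf)" unfolding j_def partner_def rn_def rf_def ..
  note R = periodic_runD[OF run]
  note Pf = rw_positions_root[OF rw_positions_nonempty(1)[folded rf_def]]
  note Pn = rw_positions_root[OF rw_positions_nonempty(3)[folded rn_def]]
  have rf_i: "rf \<le> i" and rn_rf: "rn \<le> rf"
    using rw_positions_nonempty(2,4) by (simp_all add: rf_def rn_def)
  have "(i - rf) mod ?D = 0"
    using lyndon_roots_congruent[OF R(4) _ R(1,2) Pf(2) rf_i _ Pf(6)] lyndon_root_i fw_eq_cw i_bounds R
    by simp
  then have "j mod ?D = rn mod ?D" unfolding j_def' by (metis add.right_neutral mod_add_right_eq)
  moreover have "?S \<le> j" "j + ?D \<le> Suc ?n" using Pn rn_rf rf_i i_bounds by (auto simp: j_def')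
  ultimately have same_root: "fac v j (j + ?D - 1) = fac v rn (rn + ?D - 1)"
    using Pn(2,3) R(3) by (intro fac_period_root_eq[OF R(4) _ R(1,2)]) simp_all
  have ly_j: "lyndon (\<not> cw v i) (fac v j (j + ?D - 1))" using same_root Pn(6) fw_eq_cw by simp
  show "2 \<le> partner v i" "partner v i \<le> i" "partner v i + ?D \<le> ?n"
    using Pn rn_rf rf_i i_bounds by (auto simp: j_def[symmetric] j_def')
  then have j: "2 \<le> j" "j \<le> i" "j + ?D \<le> ?n" by (simp_all add: j_def)
  show "lyndon (\<not> cw v i) (fac v (partner v i) (partner v i + ?D - 1))" using ly_j by (simp add: j_def)
  have "Rw v j = (?S, ?n) \<and> cw v j = (\<not> cw v i) \<and> Lw v j = j + ?D - 1"
  proof (cases "j = rn")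
    case True
    then show ?thesis using Pn fw_eq_cw by simp
  next
    case False
    then have "?S < j" using Pn j_def' by simp
    then show ?thesis using root_in_periodic_run[OF run _ _ D2 ly_j] j by (simp add: Rw_def)
  qed
  then show "Rw v (partner v i) = (?S, ?n)" "cw v (partner v i) = (\<not> cw v i)"
    "Lw v (partner v i) = partner v i + ?D - 1" by (simp_all add: j_def)
qed

lemma lost_partner_append: "lost (v @ [a]) (partner v i)"
proof -
  let ?u = "v @ [a]" and ?n = "length v" and ?j = "partner v i" and ?D = "Dw v i" and ?c = "\<not> cw v i"
  note R = periodic_runD[OF run] and P = partner_root
  have j1: "1 \<le> ?j" "?j \<le> length v" using P by auto
  have br: "nth1 ?u (Suc ?n) = ?c" "nth1 ?u (Suc ?n - ?D) = (\<not> ?c)"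
    using a period_letter R by (auto simp: nth1_append nth1_append_last)
  have per: "has_period_in ?u ?D ?j ?n"
    using has_period_in_append[OF has_period_in_mono[OF R(4)]] R P by (simp add: Dw_in_periodic_run[OF run])
  have "\<not> lyndon ?c (fac ?u ?j (Suc ?n))"
    by (rule not_lyndon_fac_smaller_break[OF j1(1) _ per _ _ _ br]) (use P R in auto)
  then have root: "Lw ?u ?j = Lw v ?j" "Dw ?u ?j = Dw v ?j" "Sw ?u ?j = Sw v ?j"
    using root_append[of ?j v a] P by simp_all
  have D: "Dw v ?j = ?D" using P by (simp add: Dw_def)
  have "Ew ?u ?j = ?n" using Ew_eqI[of ?j ?u] j1 root D P per br by simp
  moreover have "is_run ?u (Sw v i, ?n)" using is_run_append_break[OF run a(1)] .
  ultimately show ?thesis using P root D unfolding lost_iff by (auto simp: Rw_def)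
qed

lemma not_lost_partner: "\<not> lost v (partner v i)"
proof
  let ?j = "partner v i" and ?D = "Dw v i"
  note P = partner_root
  assume "lost v ?j"
  moreover have "Ew v ?j = length v" using P(4) by (simp add: Rw_def)
  ultimately have "lyndon (fw v (Rw v ?j)) (fac v ?j (Lw v ?j))" unfolding lost_def by auto
  then have "lyndon (fw v (Rw v i)) (fac v ?j (?j + ?D - 1))" using P Rw_i by simp
  moreover have "?j < ?j + ?D - 1" "1 \<le> ?j" "?j + ?D - 1 \<le> length v" using P D2 by auto
  ultimately show False
    using lyndon_fac_first_last[of ?j "?j + ?D - 1" v] P(7) fw_eq_cw by auto
qed

lemma partner_le: "partner v i \<le> i"
  and Rw_partner: "Rw v (partner v i) = Rw v i"
  and rw_fw_le: "rw v (Rw v i) (fw v (Rw v i)) \<le> i"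
  using partner_root rw_positions_nonempty(2) Rw_i by simp_all

end

section \<open>Counting lost positions\<close>

definition lost_image :: "bool list \<Rightarrow> bool \<Rightarrow> nat \<Rightarrow> nat" where
  "lost_image v a i =
     (if Ew v i = length v \<and> a \<noteq> nth1 v (Suc (length v) - Dw v i) \<and> a \<noteq> cw v i then partner v i else i)"

lemma lost_append_lost_image:
  assumes lost: "lost v i"
  shows "lost (v @ [a]) (lost_image v a i) \<and> lost_image v a i \<le> i"
proof (cases "Ew v i < length v")
  case True
  then show ?thesis using lost_append_Ew_less[OF lost] by (simp add: lost_image_def)
next
  case False
  then have E: "Ew v i = length v" using lost Ew_le_length[of i v] unfolding lost_def by fastforce
  show ?thesis
  proof (cases "a = nth1 v (Suc (length v) - Dw v i)")
    case True
    then show ?thesis using lost_append_period_continues[OF lost E] by (simp add: lost_image_def)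
  next
    case b: False
    then show ?thesis
      using lost_append_smaller_break[OF lost E b] lost_partner_append[OF lost E b] partner_le[OF lost E b] E
      by (cases "a = cw v i") (simp_all add: lost_image_def)
  qed
qed

lemma inj_on_lost_image: "inj_on (lost_image v a) {i. lost v i}"
proof (rule inj_onI)
  fix i1 i2 assume l: "i1 \<in> {i. lost v i}" "i2 \<in> {i. lost v i}" and eq: "lost_image v a i1 = lost_image v a i2"
  define B where "B i \<longleftrightarrow> Ew v i = length v \<and> a \<noteq> nth1 v (Suc (length v) - Dw v i) \<and> a \<noteq> cw v i" for i
  have img: "lost_image v a i = (if B i then partner v i else i)" for i by (simp add: lost_image_def B_def)
  have P: "\<not> lost v (partner v i) \<and> Rw v (partner v i) = Rw v i \<and> rw v (Rw v i) (fw v (Rw v i)) \<le> i"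
    if "lost v i" "B i" for i
    using that not_lost_partner[where v=v and i=i and a=a] Rw_partner[where v=v and i=i and a=a]
      rw_fw_le[where v=v and i=i and a=a]
    unfolding B_def by blast
  have l1: "lost v i1" and l2: "lost v i2" using l by auto
  show "i1 = i2"
  proof (cases "B i1"; cases "B i2")
    assume b: "B i1" "B i2"
    then have same: "partner v i1 = partner v i2" using eq img by simp
    have "Rw v i1 = Rw v (partner v i1)" using P[OF l1 b(1)] by simp
    also have "\<dots> = Rw v i2" using same P[OF l2 b(2)] by simp
    finally have R: "Rw v i1 = Rw v i2" .
    let ?rf = "rw v (Rw v i2) (fw v (Rw v i2))"
    have "i1 - ?rf = i2 - ?rf" using same R unfolding partner_def by simp
    moreover have "?rf \<le> i1" "?rf \<le> i2" using P[OF l1 b(1)] P[OF l2 b(2)] R by simp_all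
    ultimately show ?thesis by simp
  next
    assume "B i1" "\<not> B i2"
    then have "partner v i1 = i2" using eq img by simp
    then show ?thesis using P[OF l1 \<open>B i1\<close>] l2 by simp
  next
    assume "\<not> B i1" "B i2"
    then have "partner v i2 = i1" using eq img by simp
    then show ?thesis using P[OF l2 \<open>B i2\<close>] l1 by simp
  qed (use eq img in simp)
qed

lemma finite_lost: "finite {i. lost w i}"
  by (rule finite_subset[of _ "{..length w}"]) (auto simp: lost_def)

lemma sorted_nth_le_if_card_le:
  assumes so: "sorted xs" and di: "distinct xs" and c: "Suc k \<le> card {y \<in> set xs. y \<le> (x::nat)}"
  shows "k < length xs \<and> xs ! k \<le> x"
proof -
  have "card {y \<in> set xs. y \<le> x} \<le> card (set xs)" by (rule card_mono) auto
  also have "\<dots> = length xs" using di by (simp add: distinct_card)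
  finally have k: "k < length xs" using c by simp
  have "xs ! k \<le> x"
  proof (rule ccontr)
    assume "\<not> xs ! k \<le> x"
    have "{y \<in> set xs. y \<le> x} \<subseteq> (\<lambda>m. xs ! m) ` {..<k}"
    proof
      fix y assume "y \<in> {y \<in> set xs. y \<le> x}"
      then obtain m where m: "m < length xs" "xs ! m = y" "y \<le> x" by (auto simp: in_set_conv_nth)
      then have "m < k" using so \<open>\<not> xs ! k \<le> x\<close> by (meson le_trans not_le sorted_nth_mono)
      then show "y \<in> (\<lambda>m. xs ! m) ` {..<k}" using m by auto
    qed
    then have "card {y \<in> set xs. y \<le> x} \<le> card ((\<lambda>m. xs ! m) ` {..<k})" by (rule card_mono[rotated]) simp
    also have "\<dots> \<le> k" using card_image_le[of "{..<k}" "\<lambda>m. xs ! m"] by simp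
    finally show False using c by simp
  qed
  then show ?thesis using k by simp
qed

lemma sorted_list_of_set_nth_le_if_inj:
  fixes A B :: "nat set"
  assumes fA: "finite A" and fB: "finite B" and inj: "inj_on g A"
    and g: "\<And>x. x \<in> A \<Longrightarrow> g x \<in> B \<and> g x \<le> x"
    and k: "k < length (sorted_list_of_set A)"
  shows "k < length (sorted_list_of_set B) \<and> sorted_list_of_set B ! k \<le> sorted_list_of_set A ! k"
proof -
  define xs where "xs = sorted_list_of_set A"
  define x where "x = xs ! k"
  let ?Ax = "{y \<in> A. y \<le> x}"
  have xs: "sorted xs" "distinct xs" "set xs = A" using fA by (auto simp: xs_def)
  have kk: "k < length xs" using k by (simp add: xs_def)
  have "(\<lambda>m. xs ! m) ` {..k} \<subseteq> ?Ax"
  proof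
    fix y assume "y \<in> (\<lambda>m. xs ! m) ` {..k}"
    then obtain m where m: "m \<le> k" "y = xs ! m" by auto
    then show "y \<in> ?Ax" using xs kk sorted_nth_mono[of xs m k] by (auto simp: x_def)
  qed
  moreover have "card ((\<lambda>m. xs ! m) ` {..k}) = Suc k"
    using xs(2) kk by (subst card_image) (auto simp: inj_on_def nth_eq_iff_index_eq)
  moreover have "finite ?Ax" using fA by simp
  ultimately have "Suc k \<le> card ?Ax" by (metis card_mono)
  also have "\<dots> = card (g ` ?Ax)" using inj by (intro card_image[symmetric]) (auto simp: inj_on_def)
  also have "\<dots> \<le> card {y \<in> set (sorted_list_of_set B). y \<le> x}"
    using g fB by (intro card_mono) (auto intro: le_trans)
  finally show ?thesis
    using sorted_nth_le_if_card_le[of "sorted_list_of_set B" k x] fB by (simp add: x_def xs_def)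
qed

lemma P_append_imp: "P d (v @ [a]) \<Longrightarrow> P d v"
  unfolding P_def Let_def
proof (intro allI impI)
  let ?A = "sorted_list_of_set {i. lost v i}" and ?B = "sorted_list_of_set {i. lost (v @ [a]) i}"
  fix k assume P: "\<forall>k<length ?B. real (Suc k) * d \<le> real (?B ! k) - 1" and k: "k < length ?A"
  have "k < length ?B \<and> ?B ! k \<le> ?A ! k"
    by (rule sorted_list_of_set_nth_le_if_inj[OF finite_lost finite_lost inj_on_lost_image[of v a] _ k])
      (simp add: lost_append_lost_image)
  then show "real (Suc k) * d \<le> real (?A ! k) - 1" using P by force
qed

theorem lemma5:
  fixes d :: real and w v :: "bool list"
  assumes "P d w" and "prefix v w" and "v \<noteq> []"
  shows "P d v"
proof -
  obtain t where "w = v @ t" using assms(2) by (auto simp: prefix_def)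
  moreover have "P d (v @ t) \<Longrightarrow> P d v" for t
    by (induction t rule: rev_induct) (auto dest: P_append_imp simp flip: append_assoc)
  ultimately show ?thesis using assms(1) by simp
qed

end
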